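(* Let $0<l<1$, $x_0\in\mathbb{R}^n$, and let $j$ be a positive integer. (i) If $a\in S^{-n}_{0,\delta}$ with $0\le\delta<1$, then for all $x,z\in Q(x_0,l)$ and all Schwartz $u$, $$\int_{\mathbb{R}^n}|u(y)|\,|K_j(x,y)-K_j(z,y)|\,dy\le C\,2^jl\,Mu(x_0).$$ (ii) If $a\in L^\infty S^{-n}_0$, then for all $x,z\in Q(x_0,l)$ and all Schwartz $u$, $$\int_{\mathbb{R}^n}|u(y)|\,|K^*_j(x,y)-K^*_j(z,y)|\,dy\le C\,2^jl\,Mu(x_0).$$ Here $C$ is independent of $u,x_0,l,j,x,z$.
   Context: $S^m_{\varrho,\delta}$: smooth $a$ with $|\partial_x^\beta\partial_\xi^\alpha a|\le C_{\alpha,\beta}\langle\xi\rangle^{m-\varrho|\alpha|+\delta|\beta|}$; $L^\infty S^m_\varrho$: $a$ bounded measurable in $x$, smooth in $\xi$, $\|\partial^\alpha_\xi a(\cdot,\xi)\|_{L^\infty}\le C_\alpha\langle\xi\rangle^{m-\varrho|\alpha|}$. $Q(x_0,l)$ is the axis-parallel cube centered at $x_0$ with side length $l$. $Mu$ is the Hardy–Littlewood maximal function over axis-parallel cubes containing the point. Littlewood–Paley decomposition: fix $C_0>1$ and $\psi_{-1},\psi\in C_c^\infty(\mathbb{R}^n)$ with values in $[0,1]$, $\operatorname{supp}\psi_{-1}\subset\{|\xi|\le 2C_0\}$, $\operatorname{supp}\psi\subset\{C_0^{-1}\le|\xi|\le 2C_0\}$, and $\psi_{-1}(\xi)+\sum_{j\ge1}\psi(2^{-j}\xi)=1$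 for all $\xi$. Set $a_0(x,\xi)=a(x,\xi)\psi_{-1}(\xi)$ and $a_j(x,\xi)=a(x,\xi)\psi(2^{-j}\xi)$ for $j\ge1$. Define $K_j(x,y)=(2\pi)^{-n}\int e^{i\langle x-y,\xi\rangle}a_j(x,\xi)d\xi$, $K^*_j(x,y)=(2\pi)^{-n}\int e^{i\langle x-y,\xi\rangle}a_j(y,\xi)d\xi$, and $T_ju(x)=\int K_j(x,y)u(y)dy$, $T_j^*u(x)=\int K^*_j(x,y)u(y)dy$. *)

theory Defs
  imports "HOL-Analysis.Analysis"
begin

definition dpd :: "'a::real_normed_vector \<Rightarrow> ('a \<Rightarrow> 'b::real_normed_vector) \<Rightarrow> 'a \<Rightarrow> 'b" where
  "dpd v f x = vector_derivative (\<lambda>t::real. f (x + t *\<^sub>R v)) (at 0)"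

fun dpds :: "'a::real_normed_vector list \<Rightarrow> ('a \<Rightarrow> 'b::real_normed_vector) \<Rightarrow> 'a \<Rightarrow> 'b" where
  "dpds [] f = f"
| "dpds (v # vs) f = dpd v (dpds vs f)"

definition smooth_fn :: "('a::euclidean_space \<Rightarrow> 'b::real_normed_vector) \<Rightarrow> bool" where
  "smooth_fn f \<longleftrightarrow> (\<forall>vs. set vs \<subseteq> Basis \<longrightarrow>
      continuous_on UNIV (dpds vs f) \<and>
      (\<forall>v\<in>Basis. \<forall>x. (\<lambda>t::real. dpds vs f (x + t *\<^sub>R v)) differentiable (at 0)))"

definition jbr :: "'a::real_normed_vector \<Rightarrow> real" where
  "jbr \<xi> = sqrt (1 + (norm \<xi>)\<^sup>2)"

definition symbol_S :: "real \<Rightarrow> real \<Rightarrow> real \<Rightarrow> ('a::euclidean_space \<Rightarrow> 'a \<Rightarrow> complex) \<Rightarrow> bool" where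
  "symbol_S m \<rho> \<delta> a \<longleftrightarrow> smooth_fn (\<lambda>(x, \<xi>). a x \<xi>) \<and>
     (\<forall>bs as. set bs \<subseteq> Basis \<longrightarrow> set as \<subseteq> Basis \<longrightarrow>
       (\<exists>C. \<forall>x \<xi>. norm (dpds (map (\<lambda>b. (b, 0)) bs @ map (\<lambda>b. (0, b)) as)
                          (\<lambda>(x, \<xi>). a x \<xi>) (x, \<xi>))
               \<le> C * jbr \<xi> powr (m - \<rho> * real (length as) + \<delta> * real (length bs))))"

definition symbol_LinfS :: "real \<Rightarrow> real \<Rightarrow> ('a::euclidean_space \<Rightarrow> 'a \<Rightarrow> complex) \<Rightarrow> bool" where
  "symbol_LinfS m \<rho> a \<longleftrightarrow> (\<forall>x. smooth_fn (a x)) \<and>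
     (\<forall>\<xi>. (\<lambda>x. a x \<xi>) \<in> borel_measurable lborel) \<and>
     (\<forall>as. set as \<subseteq> Basis \<longrightarrow>
       (\<exists>C. \<forall>\<xi>. AE x in lborel. norm (dpds as (a x) \<xi>) \<le> C * jbr \<xi> powr (m - \<rho> * real (length as))))"

definition schwartz :: "('a::euclidean_space \<Rightarrow> complex) \<Rightarrow> bool" where
  "schwartz u \<longleftrightarrow> smooth_fn u \<and>
     (\<forall>vs. set vs \<subseteq> Basis \<longrightarrow> (\<forall>N::nat. bounded (range (\<lambda>x. (1 + norm x) ^ N * norm (dpds vs u x)))))"

definition cube :: "'a::euclidean_space \<Rightarrow> real \<Rightarrow> 'a set" where
  "cube c s = {y. \<forall>b\<in>Basis. \<bar>(y - c) \<bullet> b\<bar> \<le> s / 2}"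

definition maximal_fn :: "('a::euclidean_space \<Rightarrow> complex) \<Rightarrow> 'a \<Rightarrow> ennreal" where
  "maximal_fn u x = (SUP Q \<in> {cube c s | c s. s > 0 \<and> x \<in> cube c s}.
       ennreal (1 / measure lborel Q) * (\<integral>\<^sup>+ y\<in>Q. ennreal (norm (u y)) \<partial>lborel))"

definition LP_data :: "real \<Rightarrow> ('a::euclidean_space \<Rightarrow> real) \<Rightarrow> ('a \<Rightarrow> real) \<Rightarrow> bool" where
  "LP_data C0 psim1 psi \<longleftrightarrow> C0 > 1 \<and> smooth_fn psim1 \<and> smooth_fn psi \<and>
     (\<forall>\<xi>. 0 \<le> psim1 \<xi> \<and> psim1 \<xi> \<le> 1 \<and> 0 \<le> psi \<xi> \<and> psi \<xi> \<le> 1) \<and>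
     closure {\<xi>. psim1 \<xi> \<noteq> 0} \<subseteq> {\<xi>. norm \<xi> \<le> 2 * C0} \<and>
     closure {\<xi>. psi \<xi> \<noteq> 0} \<subseteq> {\<xi>. inverse C0 \<le> norm \<xi> \<and> norm \<xi> \<le> 2 * C0} \<and>
     (\<forall>\<xi>. (\<lambda>j. psi ((2 powr - real j) *\<^sub>R \<xi>)) summable_on {1..} \<and>
          psim1 \<xi> + (\<Sum>\<^sub>\<infinity>j\<in>{1::nat..}. psi ((2 powr - real j) *\<^sub>R \<xi>)) = 1)"

definition piece :: "('a::euclidean_space \<Rightarrow> real) \<Rightarrow> ('a \<Rightarrow> real) \<Rightarrow> ('a \<Rightarrow> 'a \<Rightarrow> complex) \<Rightarrow> nat \<Rightarrow> 'a \<Rightarrow> 'a \<Rightarrow> complex" where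
  "piece psim1 psi a j x \<xi> =
     (if j = 0 then a x \<xi> * complex_of_real (psim1 \<xi>)
      else a x \<xi> * complex_of_real (psi ((2 powr - real j) *\<^sub>R \<xi>)))"

definition kernel_K :: "('a::euclidean_space \<Rightarrow> real) \<Rightarrow> ('a \<Rightarrow> real) \<Rightarrow> ('a \<Rightarrow> 'a \<Rightarrow> complex) \<Rightarrow> nat \<Rightarrow> 'a \<Rightarrow> 'a \<Rightarrow> complex" where
  "kernel_K psim1 psi a j x y = complex_of_real ((2 * pi) powr - real DIM('a)) *
     (\<integral>\<xi>. exp (\<i> * complex_of_real ((x - y) \<bullet> \<xi>)) * piece psim1 psi a j x \<xi> \<partial>lborel)"

definition kernel_Kstar :: "('a::euclidean_space \<Rightarrow> real) \<Rightarrow> ('a \<Rightarrow> real) \<Rightarrow> ('a \<Rightarrow> 'a \<Rightarrow> complex) \<Rightarrow> nat \<Rightarrow> 'a \<Rightarrow> 'a \<Rightarrow> complex" where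
  "kernel_Kstar psim1 psi a j x y = complex_of_real ((2 * pi) powr - real DIM('a)) *
     (\<integral>\<xi>. exp (\<i> * complex_of_real ((x - y) \<bullet> \<xi>)) * piece psim1 psi a j y \<xi> \<partial>lborel)"

end

(*
  Write K_j(x,y) - K_j(z,y) as a Fourier integral, at the point x0 - y, of
  f(\<xi>) \<psi>(2^-j \<xi>) with f(\<xi>) = e^(i (x - x0) \<xi>) a(x,\<xi>) - e^(i (z - x0) \<xi>) a(z,\<xi>).
  On the annulus |\<xi>| ~ 2^j, f and its first n + 1 derivatives along each coordinate are
  O(2^j l 2^(-j n)): the phases move by O(l |\<xi>|), and a(x,\<xi>) - a(z,\<xi>) is O(l 2^(j \<delta>)) times
  the symbol bound.  Integrating by parts n + 1 times in the dominant coordinate of x0 - y, done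
  here by taking n + 1 finite differences of step \<pi> / |(x0 - y)_e|, each of which doubles the
  integral, gives |K_j(x,y) - K_j(z,y)| <= C 2^j l max(1, |y - x0|)^-(n+1).  Summing this weight
  against |u| over the dyadic cubes centred at x0 bounds the integral by C 2^j l Mu(x0).
  For K*_j the symbol is frozen at y, so the same bound holds for almost every y, uniformly in
  \<xi> by continuity.
*)

theory Submission
  imports Defs
begin

section \<open>Derivatives along a fixed direction\<close>

definition dpd_iter :: "'a::real_normed_vector \<Rightarrow> nat \<Rightarrow> ('a \<Rightarrow> 'b::real_normed_vector) \<Rightarrow> 'a \<Rightarrow> 'b" where
  "dpd_iter e k f = dpds (replicate k e) f"

lemma dpd_iter_0 [simp]: "dpd_iter e 0 f = f"
  by (simp add: dpd_iter_def)

lemma dpd_iter_Suc: "dpd_iter e (Suc k) f = dpd e (dpd_iter e k f)"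
  by (simp add: dpd_iter_def)

definition dpd_differentiable :: "'a::real_normed_vector \<Rightarrow> ('a \<Rightarrow> 'b::real_normed_vector) \<Rightarrow> bool" where
  "dpd_differentiable e f \<longleftrightarrow> (\<forall>p. (\<lambda>t::real. f (p + t *\<^sub>R e)) differentiable (at 0))"

definition dpd_smooth :: "'a::real_normed_vector \<Rightarrow> ('a \<Rightarrow> 'b::real_normed_vector) \<Rightarrow> bool" where
  "dpd_smooth e f \<longleftrightarrow> (\<forall>k. dpd_differentiable e (dpd_iter e k f))"

lemma dpd_smooth_imp_differentiable: "dpd_smooth e f \<Longrightarrow> dpd_differentiable e (dpd_iter e k f)"
  by (simp add: dpd_smooth_def)

lemma has_vector_derivative_dpd_0:
  assumes "dpd_differentiable e f"
  shows "((\<lambda>t. f (p + t *\<^sub>R e)) has_vector_derivative dpd e f p) (at 0)"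
  using assms unfolding dpd_differentiable_def dpd_def by (simp add: vector_derivative_works[symmetric])

lemma has_vector_derivative_dpd:
  assumes "dpd_differentiable e f"
  shows "((\<lambda>t. f (p + t *\<^sub>R e)) has_vector_derivative dpd e f (p + t0 *\<^sub>R e)) (at t0)"
proof -
  have "((\<lambda>t. f ((p + t0 *\<^sub>R e) + t *\<^sub>R e)) \<circ> (\<lambda>t. t - t0) has_vector_derivative 1 *\<^sub>R dpd e f (p + t0 *\<^sub>R e)) (at t0)"
    by (rule vector_diff_chain_at) (auto intro!: derivative_eq_intros has_vector_derivative_dpd_0[OF assms])
  moreover have "(\<lambda>t. f ((p + t0 *\<^sub>R e) + t *\<^sub>R e)) \<circ> (\<lambda>t. t - t0) = (\<lambda>t. f (p + t *\<^sub>R e))"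
    by (auto simp: fun_eq_iff algebra_simps)
  ultimately show ?thesis by simp
qed

lemma dpd_from_derivative:
  assumes "\<And>p. ((\<lambda>t. f (p + t *\<^sub>R e)) has_vector_derivative f' p) (at 0)"
  shows "dpd_differentiable e f" "dpd e f = f'"
  using assms differentiableI_vector vector_derivative_at
  by (fastforce simp: dpd_differentiable_def dpd_def)+

lemma dpd_add:
  assumes "dpd_differentiable e f" "dpd_differentiable e g"
  shows "dpd_differentiable e (\<lambda>x. f x + g x)" "dpd e (\<lambda>x. f x + g x) = (\<lambda>x. dpd e f x + dpd e g x)"
  using has_vector_derivative_add[OF has_vector_derivative_dpd_0[OF assms(1)] has_vector_derivative_dpd_0[OF assms(2)]]
  by (rule dpd_from_derivative)+

lemma dpd_diff:
  assumes "dpd_differentiable e f" "dpd_differentiable e g"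
  shows "dpd_differentiable e (\<lambda>x. f x - g x)" "dpd e (\<lambda>x. f x - g x) = (\<lambda>x. dpd e f x - dpd e g x)"
  using has_vector_derivative_diff[OF has_vector_derivative_dpd_0[OF assms(1)] has_vector_derivative_dpd_0[OF assms(2)]]
  by (rule dpd_from_derivative)+

lemma dpd_mult:
  fixes f g :: "'a::real_normed_vector \<Rightarrow> 'b::real_normed_algebra"
  assumes "dpd_differentiable e f" "dpd_differentiable e g"
  shows "dpd_differentiable e (\<lambda>x. f x * g x)"
    "dpd e (\<lambda>x. f x * g x) = (\<lambda>x. dpd e f x * g x + f x * dpd e g x)"
proof -
  have "((\<lambda>t. f (p + t *\<^sub>R e) * g (p + t *\<^sub>R e)) has_vector_derivative dpd e f p * g p + f p * dpd e g p) (at 0)" for p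
    using has_vector_derivative_mult[OF has_vector_derivative_dpd_0[OF assms(1)] has_vector_derivative_dpd_0[OF assms(2)], of p p]
    by (simp add: add.commute)
  then show "dpd_differentiable e (\<lambda>x. f x * g x)" "dpd e (\<lambda>x. f x * g x) = (\<lambda>x. dpd e f x * g x + f x * dpd e g x)"
    by (rule dpd_from_derivative)+
qed

lemma dpd_cmult:
  fixes f :: "'a::real_normed_vector \<Rightarrow> 'b::real_normed_algebra"
  assumes "dpd_differentiable e f"
  shows "dpd_differentiable e (\<lambda>x. c * f x)" "dpd e (\<lambda>x. c * f x) = (\<lambda>x. c * dpd e f x)"
  using has_vector_derivative_mult_right[OF has_vector_derivative_dpd_0[OF assms]]
  by (rule dpd_from_derivative)+

lemma dpd_sum:
  assumes "finite I" "\<And>i. i \<in> I \<Longrightarrow> dpd_differentiable e (f i)"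
  shows "dpd_differentiable e (\<lambda>x. \<Sum>i\<in>I. f i x)" "dpd e (\<lambda>x. \<Sum>i\<in>I. f i x) = (\<lambda>x. \<Sum>i\<in>I. dpd e (f i) x)"
proof -
  have "((\<lambda>t. \<Sum>i\<in>I. f i (p + t *\<^sub>R e)) has_vector_derivative (\<Sum>i\<in>I. dpd e (f i) p)) (at 0)" for p
    by (intro has_vector_derivative_sum has_vector_derivative_dpd_0 assms)
  then show "dpd_differentiable e (\<lambda>x. \<Sum>i\<in>I. f i x)" "dpd e (\<lambda>x. \<Sum>i\<in>I. f i x) = (\<lambda>x. \<Sum>i\<in>I. dpd e (f i) x)"
    by (rule dpd_from_derivative)+
qed

lemma dpd_shift:
  assumes "dpd_differentiable e g"
  shows "dpd_differentiable e (\<lambda>x. g (x + h))" "dpd e (\<lambda>x. g (x + h)) = (\<lambda>x. dpd e g (x + h))"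
proof -
  have "((\<lambda>t. g (p + t *\<^sub>R e + h)) has_vector_derivative dpd e g (p + h)) (at 0)" for p
    using has_vector_derivative_dpd_0[OF assms, of "p + h"] by (simp add: algebra_simps)
  then show "dpd_differentiable e (\<lambda>x. g (x + h))" "dpd e (\<lambda>x. g (x + h)) = (\<lambda>x. dpd e g (x + h))"
    by (rule dpd_from_derivative)+
qed

lemma dpd_exp:
  fixes w :: "'a::real_inner"
  shows "dpd_differentiable e (\<lambda>x. exp (\<i> * complex_of_real (w \<bullet> x)))"
    "dpd e (\<lambda>x. exp (\<i> * complex_of_real (w \<bullet> x))) = (\<lambda>x. (\<i> * complex_of_real (w \<bullet> e)) * exp (\<i> * complex_of_real (w \<bullet> x)))"
proof -
  have "((\<lambda>t. exp (\<i> * complex_of_real (w \<bullet> (p + t *\<^sub>R e)))) has_vector_derivative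
      (\<i> * complex_of_real (w \<bullet> e)) * exp (\<i> * complex_of_real (w \<bullet> p))) (at 0)" for p
  proof -
    have "((\<lambda>z. exp (\<i> * complex_of_real (w \<bullet> p) + z * (\<i> * complex_of_real (w \<bullet> e)))) has_field_derivative
       exp (\<i> * complex_of_real (w \<bullet> p) + of_real 0 * (\<i> * complex_of_real (w \<bullet> e))) * (\<i> * complex_of_real (w \<bullet> e))) (at (of_real 0))"
      by (auto intro!: derivative_eq_intros)
    from has_vector_derivative_real_field[OF this]
    show ?thesis by (simp add: inner_add_right algebra_simps)
  qed
  then show "dpd_differentiable e (\<lambda>x. exp (\<i> * complex_of_real (w \<bullet> x)))"
    "dpd e (\<lambda>x. exp (\<i> * complex_of_real (w \<bullet> x))) = (\<lambda>x. (\<i> * complex_of_real (w \<bullet> e)) * exp (\<i> * complex_of_real (w \<bullet> x)))"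
    by (rule dpd_from_derivative)+
qed

lemma dpd_scale_of_real:
  fixes G :: "'a::real_normed_vector \<Rightarrow> real"
  assumes "dpd_differentiable e G"
  shows "dpd_differentiable e (\<lambda>x. complex_of_real (c * G (s *\<^sub>R x)))"
    "dpd e (\<lambda>x. complex_of_real (c * G (s *\<^sub>R x))) = (\<lambda>x. complex_of_real (c * s * dpd e G (s *\<^sub>R x)))"
proof -
  have "((\<lambda>t. complex_of_real (c * G (s *\<^sub>R (p + t *\<^sub>R e)))) has_vector_derivative
      complex_of_real (c * s * dpd e G (s *\<^sub>R p))) (at 0)" for p
  proof -
    have "((\<lambda>t. G (s *\<^sub>R p + t *\<^sub>R e)) \<circ> (\<lambda>t. s * t) has_vector_derivative s *\<^sub>R dpd e G (s *\<^sub>R p + (s * 0) *\<^sub>R e)) (at 0)"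
      by (rule vector_diff_chain_at)
         (use has_vector_derivative_dpd[OF assms, of "s *\<^sub>R p" 0] in
           \<open>auto intro!: derivative_eq_intros simp: has_real_derivative_iff_has_vector_derivative[symmetric]\<close>)
    then have "((\<lambda>t. G (s *\<^sub>R (p + t *\<^sub>R e))) has_real_derivative s * dpd e G (s *\<^sub>R p)) (at 0)"
      by (simp add: o_def algebra_simps has_real_derivative_iff_has_vector_derivative)
    then show ?thesis
      by (intro has_vector_derivative_of_real) (auto intro!: derivative_eq_intros)
  qed
  then show "dpd_differentiable e (\<lambda>x. complex_of_real (c * G (s *\<^sub>R x)))"
    "dpd e (\<lambda>x. complex_of_real (c * G (s *\<^sub>R x))) = (\<lambda>x. complex_of_real (c * s * dpd e G (s *\<^sub>R x)))"
    by (rule dpd_from_derivative)+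
qed

lemma dpd_iter_add:
  assumes "dpd_smooth e f" "dpd_smooth e g"
  shows "dpd_iter e k (\<lambda>x. f x + g x) = (\<lambda>x. dpd_iter e k f x + dpd_iter e k g x)"
  by (induction k) (use assms in \<open>auto simp: dpd_iter_Suc dpd_smooth_def dpd_add\<close>)

lemma dpd_iter_diff:
  assumes "dpd_smooth e f" "dpd_smooth e g"
  shows "dpd_iter e k (\<lambda>x. f x - g x) = (\<lambda>x. dpd_iter e k f x - dpd_iter e k g x)"
  by (induction k) (use assms in \<open>auto simp: dpd_iter_Suc dpd_smooth_def dpd_diff\<close>)

lemma dpd_smooth_diff: "dpd_smooth e f \<Longrightarrow> dpd_smooth e g \<Longrightarrow> dpd_smooth e (\<lambda>x. f x - g x)"
  by (auto simp: dpd_smooth_def[of e "\<lambda>x. f x - g x"] dpd_iter_diff dpd_smooth_imp_differentiable intro: dpd_diff(1))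

lemma dpd_iter_shift:
  assumes "dpd_smooth e g"
  shows "dpd_iter e k (\<lambda>x. g (x + h)) = (\<lambda>x. dpd_iter e k g (x + h))"
  by (induction k) (use assms in \<open>auto simp: dpd_iter_Suc dpd_smooth_def dpd_shift\<close>)

lemma dpd_smooth_shift: "dpd_smooth e g \<Longrightarrow> dpd_smooth e (\<lambda>x. g (x + h))"
  by (auto simp: dpd_smooth_def[of e "\<lambda>x. g (x + h)"] dpd_iter_shift dpd_smooth_imp_differentiable intro: dpd_shift(1))

lemma dpd_iter_exp:
  fixes w :: "'a::real_inner"
  shows "dpd_iter e k (\<lambda>x. exp (\<i> * complex_of_real (w \<bullet> x))) =
    (\<lambda>x. (\<i> * complex_of_real (w \<bullet> e)) ^ k * exp (\<i> * complex_of_real (w \<bullet> x)))"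
proof (induction k)
  case (Suc k)
  show ?case
    unfolding dpd_iter_Suc Suc dpd_cmult(2)[OF dpd_exp(1)] dpd_exp(2) by (simp add: algebra_simps)
qed simp

lemma dpd_smooth_exp:
  fixes w :: "'a::real_inner"
  shows "dpd_smooth e (\<lambda>x. exp (\<i> * complex_of_real (w \<bullet> x)))"
  unfolding dpd_smooth_def dpd_iter_exp by (auto intro: dpd_cmult dpd_exp)

lemma dpd_iter_scale_of_real:
  fixes G :: "'a::real_normed_vector \<Rightarrow> real"
  assumes "dpd_smooth e G"
  shows "dpd_iter e k (\<lambda>x. complex_of_real (G (s *\<^sub>R x))) =
    (\<lambda>x. complex_of_real (s ^ k * dpd_iter e k G (s *\<^sub>R x)))"
proof (induction k)
  case (Suc k)
  show ?case
    unfolding dpd_iter_Suc Suc dpd_scale_of_real(2)[OF dpd_smooth_imp_differentiable[OF assms]]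
    by (simp add: mult_ac)
qed simp

lemma dpd_smooth_scale_of_real:
  fixes G :: "'a::real_normed_vector \<Rightarrow> real"
  shows "dpd_smooth e G \<Longrightarrow> dpd_smooth e (\<lambda>x. complex_of_real (G (s *\<^sub>R x)))"
  unfolding dpd_smooth_def[of e "\<lambda>x. complex_of_real (G (s *\<^sub>R x))"] dpd_iter_scale_of_real
  by (intro allI dpd_scale_of_real(1) dpd_smooth_imp_differentiable)

lemma binomial_leibniz_step:
  fixes F G :: "nat \<Rightarrow> 'a::comm_semiring_1"
  shows "(\<Sum>i=0..n. of_nat (n choose i) * (F (Suc i) * G (n - i) + F i * G (Suc (n - i)))) =
         (\<Sum>i=0..Suc n. of_nat (Suc n choose i) * F i * G (Suc n - i))"
proof -
  have "Suc n choose i = (n choose i) + (if i = 0 then 0 else n choose (i - 1))" for i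
    by (cases i) auto
  moreover have "(\<Sum>i=0..Suc n. of_nat (n choose i) * F i * G (Suc n - i)) =
      (\<Sum>i=0..n. of_nat (n choose i) * F i * G (Suc (n - i)))"
    by (simp add: Suc_diff_le binomial_eq_0)
  moreover have "(\<Sum>i=0..Suc n. of_nat (if i = 0 then 0 else n choose (i - 1)) * F i * G (Suc n - i)) =
      (\<Sum>i=0..n. of_nat (n choose i) * F (Suc i) * G (n - i))"
    by (subst sum.atLeast0_atMost_Suc_shift) simp
  ultimately show ?thesis
    by (simp add: of_nat_add distrib_right sum.distrib algebra_simps)
qed

lemma dpd_iter_mult:
  fixes f g :: "'a::real_normed_vector \<Rightarrow> complex"
  assumes f: "dpd_smooth e f" and g: "dpd_smooth e g"
  shows "dpd_iter e n (\<lambda>x. f x * g x) =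
     (\<lambda>x. \<Sum>i = 0..n. of_nat (n choose i) * dpd_iter e i f x * dpd_iter e (n - i) g x)"
proof (induction n)
  case (Suc n)
  have step: "dpd_differentiable e (\<lambda>x. of_nat (n choose i) * dpd_iter e i f x * dpd_iter e (n - i) g x)"
    "dpd e (\<lambda>x. of_nat (n choose i) * dpd_iter e i f x * dpd_iter e (n - i) g x) =
     (\<lambda>x. of_nat (n choose i) * (dpd_iter e (Suc i) f x * dpd_iter e (n - i) g x +
                                 dpd_iter e i f x * dpd_iter e (Suc (n - i)) g x))" for i
    using dpd_mult[OF dpd_cmult(1) dpd_smooth_imp_differentiable[OF g], OF dpd_smooth_imp_differentiable[OF f]]
    by (simp_all add: dpd_cmult(2) dpd_smooth_imp_differentiable f g dpd_iter_Suc algebra_simps)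
  have "dpd_iter e (Suc n) (\<lambda>x. f x * g x) =
      (\<lambda>x. \<Sum>i = 0..n. of_nat (n choose i) * (dpd_iter e (Suc i) f x * dpd_iter e (n - i) g x +
                                                 dpd_iter e i f x * dpd_iter e (Suc (n - i)) g x))"
    by (simp add: dpd_iter_Suc Suc dpd_sum(2) step)
  with binomial_leibniz_step[where F = "\<lambda>i. dpd_iter e i f x" and G = "\<lambda>i. dpd_iter e i g x" for x]
  show ?case by simp
qed simp

lemma dpd_smooth_mult:
  fixes f g :: "'a::real_normed_vector \<Rightarrow> complex"
  assumes "dpd_smooth e f" "dpd_smooth e g"
  shows "dpd_smooth e (\<lambda>x. f x * g x)"
  unfolding dpd_smooth_def dpd_iter_mult[OF assms]
  by (intro allI dpd_sum(1) finite_atLeastAtMost dpd_mult dpd_cmult(1) dpd_smooth_imp_differentiable assms)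

lemma norm_dpd_iter_mult_le:
  fixes f g :: "'a::real_normed_vector \<Rightarrow> complex"
  assumes "dpd_smooth e f" "dpd_smooth e g"
    and F: "\<And>i. i \<le> n \<Longrightarrow> norm (dpd_iter e i f x) \<le> F i"
    and G: "\<And>i. i \<le> n \<Longrightarrow> norm (dpd_iter e i g x) \<le> G i"
  shows "norm (dpd_iter e n (\<lambda>x. f x * g x) x) \<le> (\<Sum>i = 0..n. real (n choose i) * F i * G (n - i))"
proof -
  have "norm (dpd_iter e n (\<lambda>x. f x * g x) x) \<le>
      (\<Sum>i = 0..n. norm (of_nat (n choose i) * dpd_iter e i f x * dpd_iter e (n - i) g x))"
    unfolding dpd_iter_mult[OF assms(1,2)] by (rule norm_sum)
  also have "\<dots> \<le> (\<Sum>i = 0..n. real (n choose i) * F i * G (n - i))"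
  proof (rule sum_mono)
    fix i assume "i \<in> {0..n}"
    then show "norm (of_nat (n choose i) * dpd_iter e i f x * dpd_iter e (n - i) g x) \<le> real (n choose i) * F i * G (n - i)"
      using F[of i] G[of "n - i"] by (auto simp: norm_mult intro!: mult_mono order_trans[OF norm_ge_zero])
  qed
  finally show ?thesis .
qed

lemma norm_diff_le_dpd_bound:
  fixes g :: "'a::real_normed_vector \<Rightarrow> 'b::real_normed_vector"
  assumes "dpd_differentiable e g" "\<And>p. norm (dpd e g p) \<le> B"
  shows "norm (g p - g (p + s *\<^sub>R e)) \<le> B * \<bar>s\<bar>"
proof -
  have "((\<lambda>t. g (p + t *\<^sub>R e)) has_derivative (\<lambda>u. u *\<^sub>R dpd e g (p + t *\<^sub>R e))) (at t within UNIV)" for t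
    using has_vector_derivative_dpd[OF assms(1), of p t] unfolding has_vector_derivative_def by simp
  moreover have "onorm (\<lambda>u::real. u *\<^sub>R dpd e g (p + t *\<^sub>R e)) \<le> B" for t
    using onorm_scaleR_left[OF bounded_linear_ident, of "dpd e g (p + t *\<^sub>R e)"] assms(2)
    by (simp add: onorm_id)
  ultimately have "norm (g (p + 0 *\<^sub>R e) - g (p + s *\<^sub>R e)) \<le> B * norm (0 - s)"
    by (intro differentiable_bound[OF convex_UNIV]) auto
  then show ?thesis by simp
qed

lemma norm_diff_le_sum_Basis_dpd_bound:
  fixes G :: "'a::euclidean_space \<Rightarrow> 'b::real_normed_vector"
  assumes "\<And>b. b \<in> Basis \<Longrightarrow> dpd_differentiable b G" "\<And>b p. b \<in> Basis \<Longrightarrow> norm (dpd b G p) \<le> L"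
  shows "norm (G x - G z) \<le> L * (\<Sum>b\<in>Basis. \<bar>(x - z) \<bullet> b\<bar>)"
proof -
  \<comment> \<open>Walk from \<open>x\<close> to \<open>z\<close> one coordinate direction at a time.\<close>
  have "norm (G p - G (p + (\<Sum>b\<in>S. (d \<bullet> b) *\<^sub>R b))) \<le> L * (\<Sum>b\<in>S. \<bar>d \<bullet> b\<bar>)" if "S \<subseteq> Basis" for S p d
    using that
  proof (induction S rule: infinite_finite_induct)
    case (infinite S)
    then show ?case using finite_subset[OF _ finite_Basis] by blast
  next
    case (insert b S)
    let ?q = "p + (\<Sum>b\<in>S. (d \<bullet> b) *\<^sub>R b)"
    have "norm (G p - G (p + (\<Sum>b\<in>insert b S. (d \<bullet> b) *\<^sub>R b)))
        \<le> norm (G p - G ?q) + norm (G ?q - G (?q + (d \<bullet> b) *\<^sub>R b))"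
      using insert by (simp add: algebra_simps norm_triangle_ineq4 order_trans[OF _ norm_triangle_ineq])
    also have "\<dots> \<le> L * (\<Sum>b\<in>S. \<bar>d \<bullet> b\<bar>) + L * \<bar>d \<bullet> b\<bar>"
      using insert norm_diff_le_dpd_bound[OF assms, of b ?q "d \<bullet> b"] by (intro add_mono) auto
    finally show ?case using insert by (simp add: algebra_simps)
  qed simp
  from this[of Basis x "z - x"] have "norm (G x - G z) \<le> L * (\<Sum>b\<in>Basis. \<bar>(z - x) \<bullet> b\<bar>)"
    by (simp only: euclidean_representation add.commute[of x] diff_add_cancel subset_refl simp_thms)
  moreover have "\<bar>(z - x) \<bullet> b\<bar> = \<bar>(x - z) \<bullet> b\<bar>" for b
    by (simp add: inner_diff_left)
  ultimately show ?thesis by simp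
qed

lemma dpd_iter_eq_0_on_open:
  fixes f :: "'a::real_normed_vector \<Rightarrow> 'b::real_normed_vector"
  assumes "open U" "\<And>x. x \<in> U \<Longrightarrow> f x = 0" "x \<in> U"
  shows "dpd_iter e k f x = 0"
  using assms(3)
proof (induction k arbitrary: x)
  case (Suc k)
  have "open ((\<lambda>t::real. x + t *\<^sub>R e) -` U)"
    by (intro open_vimage assms(1) continuous_intros)
  then have "((\<lambda>t::real. dpd_iter e k f (x + t *\<^sub>R e)) has_vector_derivative 0) (at 0)"
    by (rule has_vector_derivative_transform_within_open[OF has_vector_derivative_const])
       (use Suc in auto)
  then show ?case unfolding dpd_iter_Suc dpd_def by (rule vector_derivative_at)
qed (use assms(2) in simp)

lemma smooth_fn_continuous: "smooth_fn f \<Longrightarrow> continuous_on UNIV f"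
  unfolding smooth_fn_def by (metis dpds.simps(1) empty_set empty_subsetI)

lemma smooth_fn_dpd_smooth:
  fixes f :: "'a::euclidean_space \<Rightarrow> 'b::real_normed_vector"
  assumes "smooth_fn f" "e \<in> Basis"
  shows "dpd_smooth e f" "continuous_on UNIV (dpd_iter e k f)"
  using assms unfolding smooth_fn_def dpd_smooth_def dpd_differentiable_def dpd_iter_def
  by (simp_all add: subset_iff)

lemma dpds_snd_slice:
  fixes F :: "'a::euclidean_space \<times> 'b::euclidean_space \<Rightarrow> 'c::real_normed_vector"
  shows "dpds (map (\<lambda>b. (0, b)) bs) F = (\<lambda>(x, \<xi>). dpds bs (\<lambda>\<eta>. F (x, \<eta>)) \<xi>)"
proof (induction bs)
  case (Cons b bs)
  have "dpd (0, b) (\<lambda>(x, \<xi>). dpds bs (\<lambda>\<eta>. F (x, \<eta>)) \<xi>) (x, \<xi>) = dpd b (dpds bs (\<lambda>\<eta>. F (x, \<eta>))) \<xi>" for x \<xi>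
    unfolding dpd_def by simp
  then show ?case by (simp only: list.map dpds.simps Cons.IH) (auto simp: fun_eq_iff)
qed auto

lemma dpd_fst_slice:
  fixes G :: "'a::euclidean_space \<times> 'b::euclidean_space \<Rightarrow> 'c::real_normed_vector"
  shows "dpd (b, 0) G (x, \<xi>) = dpd b (\<lambda>x'. G (x', \<xi>)) x"
  unfolding dpd_def by simp

lemma dpd_iter_slice:
  fixes a :: "'a::euclidean_space \<Rightarrow> 'a \<Rightarrow> complex"
  shows "dpd_iter e i (a x) \<xi> = dpds (map (\<lambda>b. (0, b)) (replicate i e)) (\<lambda>(x, \<xi>). a x \<xi>) (x, \<xi>)"
  unfolding dpd_iter_def dpds_snd_slice by simp

lemma smooth_fn_slice:
  fixes a :: "'a::euclidean_space \<Rightarrow> 'a \<Rightarrow> complex"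
  assumes sm: "smooth_fn (\<lambda>(x, \<xi>). a x \<xi>)"
  shows "smooth_fn (a x)"
  unfolding smooth_fn_def
proof (intro allI impI conjI ballI)
  fix bs :: "'a list" assume bs: "set bs \<subseteq> Basis"
  let ?bs = "map (\<lambda>b. (0::'a, b)) bs"
  have sbs: "set ?bs \<subseteq> Basis" using bs by (auto simp: Basis_prod_def)
  have eq: "dpds bs (a x) \<xi> = dpds ?bs (\<lambda>(x, \<xi>). a x \<xi>) (x, \<xi>)" for \<xi>
    by (simp add: dpds_snd_slice)
  have "continuous_on UNIV (dpds ?bs (\<lambda>(x, \<xi>). a x \<xi>))"
    using sm sbs unfolding smooth_fn_def by blast
  then have "continuous_on UNIV (\<lambda>\<xi>. dpds ?bs (\<lambda>(x, \<xi>). a x \<xi>) (x, \<xi>))"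
    by (rule continuous_on_compose2) (auto intro: continuous_intros)
  then show "continuous_on UNIV (dpds bs (a x))" by (simp add: eq)
  fix v \<xi> :: 'a assume "v \<in> Basis"
  then have "(0, v) \<in> (Basis :: ('a \<times> 'a) set)" by (auto simp: Basis_prod_def)
  then have "(\<lambda>t. dpds ?bs (\<lambda>(x, \<xi>). a x \<xi>) ((x, \<xi>) + t *\<^sub>R (0, v))) differentiable (at 0)"
    using sm sbs unfolding smooth_fn_def by blast
  then show "(\<lambda>t. dpds bs (a x) (\<xi> + t *\<^sub>R v)) differentiable (at 0)" by (simp add: eq)
qed

section \<open>Decay of Fourier integrals by finite differences\<close>

definition fin_diff :: "'a::real_normed_vector \<Rightarrow> ('a \<Rightarrow> 'b::ab_group_add) \<Rightarrow> 'a \<Rightarrow> 'b" where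
  "fin_diff h g = (\<lambda>x. g x - g (x + h))"

definition cont_supp_cball :: "real \<Rightarrow> ('a::real_normed_vector \<Rightarrow> 'b::real_normed_vector) \<Rightarrow> bool" where
  "cont_supp_cball R g \<longleftrightarrow> continuous_on UNIV g \<and> (\<forall>x. R < norm x \<longrightarrow> g x = 0)"

lemma cont_supp_cball_mono: "cont_supp_cball R g \<Longrightarrow> R \<le> R' \<Longrightarrow> cont_supp_cball R' g"
  unfolding cont_supp_cball_def by auto

lemma cont_supp_cball_diff:
  "cont_supp_cball R f \<Longrightarrow> cont_supp_cball R g \<Longrightarrow> cont_supp_cball R (\<lambda>x. f x - g x)"
  unfolding cont_supp_cball_def by (auto intro: continuous_on_diff)

lemma cont_supp_cball_mult:
  fixes g :: "'a::real_normed_vector \<Rightarrow> 'b::real_normed_algebra"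
  shows "continuous_on UNIV f \<Longrightarrow> cont_supp_cball R g \<Longrightarrow> cont_supp_cball R (\<lambda>x. f x * g x)"
  unfolding cont_supp_cball_def by (simp add: continuous_on_mult)

lemma cont_supp_cball_shift:
  fixes g :: "'a::real_normed_vector \<Rightarrow> 'b::real_normed_vector"
  assumes "cont_supp_cball R g"
  shows "cont_supp_cball (R + norm h) (\<lambda>x. g (x + h))"
proof -
  have "continuous_on UNIV g"
    using assms unfolding cont_supp_cball_def by blast
  then have "continuous_on UNIV (\<lambda>x. g (x + h))"
    by (rule continuous_on_compose2) (auto intro!: continuous_on_add continuous_on_id continuous_on_const)
  moreover have "g (x + h) = 0" if "R + norm h < norm x" for x
  proof -
    have "norm x - norm h \<le> norm (x + h)"
      using norm_triangle_ineq2[of x "- h"] by simp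
    then show ?thesis using assms that unfolding cont_supp_cball_def by simp
  qed
  ultimately show ?thesis unfolding cont_supp_cball_def by blast
qed

lemma continuous_on_exp_inner: "continuous_on UNIV (\<lambda>x. exp (\<i> * complex_of_real (w \<bullet> x)))"
  by (intro continuous_intros)

lemma cont_supp_cball_fin_diff:
  assumes "cont_supp_cball R g"
  shows "cont_supp_cball (R + norm h) (fin_diff h g)"
  unfolding fin_diff_def
  by (intro cont_supp_cball_diff cont_supp_cball_shift cont_supp_cball_mono[OF assms] assms) simp

lemma cont_supp_cball_fin_diff_iter:
  "cont_supp_cball R g \<Longrightarrow> cont_supp_cball (R + real m * norm h) ((fin_diff h ^^ m) g)"
proof (induction m arbitrary: g R)
  case (Suc m)
  from Suc.IH[OF cont_supp_cball_fin_diff[OF Suc.prems]] show ?case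
    by (simp only: funpow_Suc_right o_apply) (simp add: algebra_simps)
qed simp

lemma integrable_cont_supp_cball:
  fixes g :: "'a::euclidean_space \<Rightarrow> 'b::{banach, second_countable_topology}"
  assumes "cont_supp_cball R g"
  shows "integrable lborel g"
proof -
  have "integrable lborel (\<lambda>x. indicator (cball 0 R) x *\<^sub>R g x)"
    using assms unfolding cont_supp_cball_def
    by (intro borel_integrable_compact compact_cball) (auto intro: continuous_on_subset)
  moreover have "indicator (cball 0 R) x *\<^sub>R g x = g x" for x
    using assms unfolding cont_supp_cball_def by (auto simp: indicator_def not_le)
  ultimately show ?thesis by simp
qed

lemma integral_lborel_translate:
  fixes F :: "'a::euclidean_space \<Rightarrow> 'b::{banach, second_countable_topology}"
  assumes "F \<in> borel_measurable borel"
  shows "(\<integral>x. F (x + h) \<partial>lborel) = (\<integral>x. F x \<partial>lborel)"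
proof -
  have "(\<integral>x. F x \<partial>lborel) = (\<integral>x. F x \<partial>distr lborel borel ((+) h))"
    by (simp add: lborel_distr_plus)
  also have "\<dots> = (\<integral>x. F (h + x) \<partial>lborel)"
    by (rule integral_distr) (auto simp: assms)
  finally show ?thesis by (simp add: add.commute)
qed

lemma integral_fourier_fin_diff:
  fixes g :: "'a::euclidean_space \<Rightarrow> complex"
  assumes "cont_supp_cball R g" "w \<bullet> h = pi"
  shows "(\<integral>x. exp (\<i> * complex_of_real (w \<bullet> x)) * fin_diff h g x \<partial>lborel) =
         2 * (\<integral>x. exp (\<i> * complex_of_real (w \<bullet> x)) * g x \<partial>lborel)"
proof -
  let ?E = "\<lambda>x. exp (\<i> * complex_of_real (w \<bullet> x))"
  have E_shift: "?E (x + h) = - ?E x" for x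
  proof -
    have "?E (x + h) = ?E x * exp (\<i> * complex_of_real pi)"
      using assms(2) by (simp add: inner_add_right distrib_left exp_add)
    also have "exp (\<i> * complex_of_real pi) = -1"
      by (simp add: exp_eq_polar)
    finally show ?thesis by simp
  qed
  have supp: "cont_supp_cball R (\<lambda>x. ?E x * g x)" "cont_supp_cball (R + norm h) (\<lambda>x. ?E x * g (x + h))"
    using assms(1) cont_supp_cball_shift[OF assms(1)] by (simp_all add: cont_supp_cball_mult continuous_on_exp_inner)
  have "(\<integral>x. ?E x * g x \<partial>lborel) = (\<integral>x. ?E (x + h) * g (x + h) \<partial>lborel)"
    using integral_lborel_translate[of "\<lambda>x. ?E x * g x" h] supp(1)
    by (simp add: cont_supp_cball_def borel_measurable_continuous_onI)
  also have "\<dots> = - (\<integral>x. ?E x * g (x + h) \<partial>lborel)"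
    by (simp add: E_shift)
  finally have "(\<integral>x. ?E x * g (x + h) \<partial>lborel) = - (\<integral>x. ?E x * g x \<partial>lborel)" by simp
  moreover have "(\<integral>x. ?E x * fin_diff h g x \<partial>lborel) = (\<integral>x. ?E x * g x \<partial>lborel) - (\<integral>x. ?E x * g (x + h) \<partial>lborel)"
    unfolding fin_diff_def right_diff_distrib
    by (intro Bochner_Integration.integral_diff integrable_cont_supp_cball[OF supp(1)] integrable_cont_supp_cball[OF supp(2)])
  ultimately show ?thesis by simp
qed

lemma integral_fourier_fin_diff_iter:
  fixes g :: "'a::euclidean_space \<Rightarrow> complex"
  assumes "cont_supp_cball R g" "w \<bullet> h = pi"
  shows "(\<integral>x. exp (\<i> * complex_of_real (w \<bullet> x)) * (fin_diff h ^^ m) g x \<partial>lborel) =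
         2 ^ m * (\<integral>x. exp (\<i> * complex_of_real (w \<bullet> x)) * g x \<partial>lborel)"
  using assms(1)
proof (induction m arbitrary: g R)
  case (Suc m)
  have "(fin_diff h ^^ Suc m) g = (fin_diff h ^^ m) (fin_diff h g)"
    by (simp only: funpow_Suc_right o_apply)
  then show ?case
    using Suc.IH[OF cont_supp_cball_fin_diff[OF Suc.prems]] integral_fourier_fin_diff[OF Suc.prems assms(2)]
    by simp
qed simp

lemma dpd_iter_fin_diff:
  assumes "dpd_smooth e g"
  shows "dpd_iter e k (fin_diff h g) = fin_diff h (dpd_iter e k g)" "dpd_smooth e (fin_diff h g)"
  unfolding fin_diff_def
  using dpd_iter_diff[OF assms dpd_smooth_shift[OF assms]] dpd_iter_shift[OF assms]
  by (simp_all add: dpd_smooth_diff dpd_smooth_shift assms)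

lemma norm_fin_diff_iter_le:
  assumes "dpd_smooth e g" "\<And>p. norm (dpd_iter e m g p) \<le> B"
  shows "norm ((fin_diff (s *\<^sub>R e) ^^ m) g p) \<le> \<bar>s\<bar> ^ m * B"
  using assms
proof (induction m arbitrary: g B)
  case (Suc m)
  have "norm (dpd_iter e m (fin_diff (s *\<^sub>R e) g) p) \<le> B * \<bar>s\<bar>" for p
    using norm_diff_le_dpd_bound[OF dpd_smooth_imp_differentiable[OF Suc.prems(1)], of m B p s] Suc.prems(2)
    unfolding dpd_iter_fin_diff(1)[OF Suc.prems(1)] by (simp add: fin_diff_def dpd_iter_Suc)
  from Suc.IH[OF dpd_iter_fin_diff(2)[OF Suc.prems(1)] this] show ?case
    by (simp only: funpow_Suc_right o_apply) (simp add: algebra_simps)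
qed simp

lemma norm_integral_cont_supp_cball_le:
  fixes g :: "'a::euclidean_space \<Rightarrow> complex"
  assumes "cont_supp_cball R g" "\<And>x. norm (g x) \<le> B"
  shows "norm (\<integral>x. exp (\<i> * complex_of_real (w \<bullet> x)) * g x \<partial>lborel) \<le> B * measure lborel (cball (0::'a) R)"
proof -
  let ?f = "\<lambda>x. exp (\<i> * complex_of_real (w \<bullet> x)) * g x"
  have "emeasure lborel (cball (0::'a) R) < \<infinity>"
    by (rule emeasure_compact_finite) simp
  then have int: "integrable lborel (\<lambda>x. B * indicator (cball (0::'a) R) x)"
    by (intro integrable_mult_right integrable_real_indicator) auto
  have "norm (\<integral>x. ?f x \<partial>lborel) \<le> (\<integral>x. norm (?f x) \<partial>lborel)"
    by (rule integral_norm_bound)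
  also have "\<dots> \<le> (\<integral>x. B * indicator (cball (0::'a) R) x \<partial>lborel)"
  proof (rule integral_mono[OF integrable_norm int])
    show "integrable lborel ?f"
      by (rule integrable_cont_supp_cball[OF cont_supp_cball_mult[OF continuous_on_exp_inner assms(1)]])
    show "norm (?f x) \<le> B * indicator (cball 0 R) x" for x
      using assms unfolding cont_supp_cball_def by (cases "x \<in> cball 0 R") (auto simp: norm_mult not_le)
  qed
  also have "\<dots> = B * measure lborel (cball (0::'a) R)"
    by simp
  finally show ?thesis .
qed

lemma norm_fourier_integral_decay_along:
  fixes c :: "'a::euclidean_space \<Rightarrow> complex"
  assumes supp: "cont_supp_cball R c" and smooth: "dpd_smooth e c" and e: "norm e = 1"
    and bound: "\<And>p. norm (dpd_iter e m c p) \<le> B" and we: "w \<bullet> e \<noteq> 0"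
  shows "norm (\<integral>x. exp (\<i> * complex_of_real (w \<bullet> x)) * c x \<partial>lborel)
      \<le> (pi / \<bar>w \<bullet> e\<bar>) ^ m * B * measure lborel (cball (0::'a) (R + real m * (pi / \<bar>w \<bullet> e\<bar>)))"
proof -
  \<comment> \<open>A step \<open>h\<close> with \<open>w \<bullet> h = pi\<close> flips the sign of the phase, so each difference doubles the
    integral, while \<open>m\<close> differences of \<open>c\<close> are bounded by \<open>\<bar>h\<bar>^m B\<close>.\<close>
  define s where "s = pi / (w \<bullet> e)"
  have wh: "w \<bullet> (s *\<^sub>R e) = pi" and nh: "norm (s *\<^sub>R e) = pi / \<bar>w \<bullet> e\<bar>" and s: "\<bar>s\<bar> = pi / \<bar>w \<bullet> e\<bar>"
    using we e by (simp_all add: s_def)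
  let ?I = "\<integral>x. exp (\<i> * complex_of_real (w \<bullet> x)) * c x \<partial>lborel"
  have "2 ^ m * norm ?I = norm (\<integral>x. exp (\<i> * complex_of_real (w \<bullet> x)) * (fin_diff (s *\<^sub>R e) ^^ m) c x \<partial>lborel)"
    by (simp add: integral_fourier_fin_diff_iter[OF supp wh] norm_mult norm_power)
  also have "\<dots> \<le> (\<bar>s\<bar> ^ m * B) * measure lborel (cball (0::'a) (R + real m * norm (s *\<^sub>R e)))"
    by (intro norm_integral_cont_supp_cball_le cont_supp_cball_fin_diff_iter supp
        norm_fin_diff_iter_le[OF smooth bound])
  finally have "2 ^ m * norm ?I \<le> (\<bar>s\<bar> ^ m * B) * measure lborel (cball (0::'a) (R + real m * norm (s *\<^sub>R e)))" .
  moreover have "norm ?I \<le> 2 ^ m * norm ?I"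
    by (simp add: mult_le_cancel_right1)
  ultimately show ?thesis
    unfolding nh s by linarith
qed

lemma measure_cball_le:
  assumes "0 \<le> r"
  shows "measure lborel (cball (0::'a::euclidean_space) r) \<le> (2 * r) ^ DIM('a)"
proof -
  have "\<bar>x \<bullet> i\<bar> \<le> r" if "norm x \<le> r" "i \<in> Basis" for x :: 'a and i
    using Basis_le_norm[OF that(2), of x] that(1) by linarith
  then have "cball (0::'a) r \<subseteq> cbox (- r *\<^sub>R One) (r *\<^sub>R One)"
    by (force simp: mem_box abs_le_iff)
  then have "measure lborel (cball (0::'a) r) \<le> measure lborel (cbox (- r *\<^sub>R One) (r *\<^sub>R One :: 'a))"
    by (intro measure_mono_fmeasurable) auto
  also have "\<dots> = (2 * r) ^ DIM('a)"
    using assms unfolding measure_lborel_cbox_eq by (simp add: inner_diff_left algebra_simps)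
  finally show ?thesis .
qed

lemma exists_Basis_norm_le_DIM_inner:
  fixes w :: "'a::euclidean_space"
  shows "\<exists>e\<in>Basis. norm w \<le> real DIM('a) * \<bar>w \<bullet> e\<bar>"
proof -
  let ?m = "Max ((\<lambda>b. \<bar>w \<bullet> b\<bar>) ` Basis)"
  have "?m \<in> (\<lambda>b. \<bar>w \<bullet> b\<bar>) ` Basis"
    by (intro Max_in) auto
  then obtain e where e: "e \<in> Basis" "\<bar>w \<bullet> e\<bar> = ?m"
    by (auto simp del: Max_in)
  have "norm w \<le> (\<Sum>b\<in>Basis. \<bar>w \<bullet> b\<bar>)"
    by (rule norm_le_l1)
  also have "\<dots> \<le> (\<Sum>b\<in>(Basis::'a set). \<bar>w \<bullet> e\<bar>)"
    unfolding e(2) by (intro sum_mono Max_ge) auto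
  finally show ?thesis using e(1) by auto
qed

lemma exists_Basis_pi_div_inner_le:
  fixes w :: "'a::euclidean_space"
  assumes "1 < norm w"
  obtains e where "e \<in> Basis" "0 < \<bar>w \<bullet> e\<bar>" "pi / \<bar>w \<bullet> e\<bar> \<le> real DIM('a) * pi / norm w"
proof -
  obtain e where e: "e \<in> Basis" "norm w \<le> real DIM('a) * \<bar>w \<bullet> e\<bar>"
    using exists_Basis_norm_le_DIM_inner[of w] by blast
  have n: "1 \<le> real DIM('a)" by (simp add: DIM_positive Suc_leI)
  have we: "0 < \<bar>w \<bullet> e\<bar>" using e(2) assms by (cases "w \<bullet> e = 0") auto
  have "norm w / real DIM('a) \<le> \<bar>w \<bullet> e\<bar>"
    using e(2) n by (simp add: divide_le_eq mult.commute)
  then have "pi / \<bar>w \<bullet> e\<bar> \<le> pi / (norm w / real DIM('a))"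
    by (rule divide_left_mono) (use assms n we in \<open>auto intro!: divide_pos_pos mult_pos_pos\<close>)
  then show ?thesis
    using that e(1) we by (simp add: mult.commute)
qed

definition fourier_decay_const :: "nat \<Rightarrow> nat \<Rightarrow> real \<Rightarrow> real" where
  "fourier_decay_const n m \<rho> = (2 * \<rho>) ^ n + (real n * pi) ^ m * (2 * \<rho> + 2 * real m * real n * pi) ^ n"

lemma norm_fourier_integral_decay:
  fixes c :: "'a::euclidean_space \<Rightarrow> complex"
  assumes P: "1 \<le> P" and \<rho>: "0 \<le> \<rho>" and supp: "cont_supp_cball (\<rho> * P) c"
    and smooth: "\<And>e. e \<in> Basis \<Longrightarrow> dpd_smooth e c"
    and B0: "\<And>\<xi>. norm (c \<xi>) \<le> B" and Bm: "\<And>e \<xi>. e \<in> Basis \<Longrightarrow> norm (dpd_iter e m c \<xi>) \<le> B"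
  shows "norm (\<integral>\<xi>. exp (\<i> * complex_of_real (w \<bullet> \<xi>)) * c \<xi> \<partial>lborel)
     \<le> fourier_decay_const DIM('a) m \<rho> * B * P ^ DIM('a) / max 1 (norm w) ^ m"
proof -
  define n where "n = DIM('a)"
  let ?I = "\<integral>\<xi>. exp (\<i> * complex_of_real (w \<bullet> \<xi>)) * c \<xi> \<partial>lborel"
  have B: "0 \<le> B" using B0 order_trans norm_ge_zero by blast
  have K1: "(2 * \<rho>) ^ n \<le> fourier_decay_const n m \<rho>"
    and K2: "(real n * pi) ^ m * (2 * \<rho> + 2 * real m * real n * pi) ^ n \<le> fourier_decay_const n m \<rho>"
    using \<rho> by (auto simp: fourier_decay_const_def)
  show ?thesis
  proof (cases "norm w \<le> 1")
    case True
    have "norm ?I \<le> B * measure lborel (cball (0::'a) (\<rho> * P))"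
      by (rule norm_integral_cont_supp_cball_le[OF supp B0])
    also have "\<dots> \<le> B * (2 * \<rho> * P) ^ n"
      using measure_cball_le[of "\<rho> * P", where 'a = 'a] \<rho> P B unfolding n_def
      by (auto intro!: mult_left_mono simp: mult.assoc)
    also have "\<dots> \<le> fourier_decay_const n m \<rho> * B * P ^ n"
      using mult_right_mono[OF K1, of "B * P ^ n"] B P by (simp add: power_mult_distrib mult_ac)
    finally show ?thesis using True unfolding n_def by simp
  next
    case False
    obtain e where e: "e \<in> Basis" "0 < \<bar>w \<bullet> e\<bar>" "pi / \<bar>w \<bullet> e\<bar> \<le> real n * pi / norm w"
      using exists_Basis_pi_div_inner_le[of w] False unfolding n_def by auto
    define q where "q = pi / \<bar>w \<bullet> e\<bar>"
    have q0: "0 \<le> q" unfolding q_def by simp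
    have qw: "q \<le> real n * pi / norm w"
      using e(3) unfolding q_def .
    also have "\<dots> \<le> real n * pi / 1"
      using False by (intro divide_left_mono) auto
    finally have qn: "q \<le> real n * pi" by simp
    have "norm ?I \<le> q ^ m * B * measure lborel (cball (0::'a) (\<rho> * P + real m * q))"
      unfolding q_def
      by (rule norm_fourier_integral_decay_along[OF supp smooth[OF e(1)] norm_Basis[OF e(1)] Bm[OF e(1)]])
         (use e(2) in auto)
    also have "\<dots> \<le> q ^ m * B * (2 * (\<rho> * P + real m * q)) ^ n"
      using measure_cball_le[of "\<rho> * P + real m * q", where 'a = 'a] \<rho> P q0 B unfolding n_def
      by (intro mult_left_mono) auto
    also have "\<dots> \<le> (real n * pi / norm w) ^ m * B * ((2 * \<rho> + 2 * real m * real n * pi) * P) ^ n"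
    proof -
      have "real m * q \<le> real m * (real n * pi) * P"
        using mult_left_mono[OF qn, of "real m"] mult_left_mono[OF P, of "real m * (real n * pi)"] by simp
      then have "2 * (\<rho> * P + real m * q) \<le> (2 * \<rho> + 2 * real m * real n * pi) * P"
        by (simp add: algebra_simps)
      then have ball: "(2 * (\<rho> * P + real m * q)) ^ n \<le> ((2 * \<rho> + 2 * real m * real n * pi) * P) ^ n"
        by (rule power_mono) (use \<rho> P q0 in auto)
      have "q ^ m * B \<le> (real n * pi / norm w) ^ m * B"
        by (intro mult_right_mono power_mono qw q0 B)
      from mult_mono[OF this ball] show ?thesis
        using \<rho> P q0 B by simp
    qed
    also have "\<dots> = (real n * pi) ^ m * (2 * \<rho> + 2 * real m * real n * pi) ^ n * B * P ^ n / norm w ^ m"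
      by (simp add: power_divide power_mult_distrib)
    also have "\<dots> \<le> fourier_decay_const n m \<rho> * B * P ^ n / norm w ^ m"
      using K2 B P by (intro divide_right_mono mult_right_mono) auto
    finally show ?thesis using False unfolding n_def by simp
  qed
qed

section \<open>Cubes and the maximal function\<close>

lemma cube_eq_cbox: "cube c s = cbox (c - (s / 2) *\<^sub>R One) (c + (s / 2) *\<^sub>R One)"
proof -
  have "\<bar>(x - c) \<bullet> b\<bar> \<le> s / 2 \<longleftrightarrow> (c - (s / 2) *\<^sub>R One) \<bullet> b \<le> x \<bullet> b \<and> x \<bullet> b \<le> (c + (s / 2) *\<^sub>R One) \<bullet> b"
    if "b \<in> Basis" for x b
    using that by (cases "x \<bullet> b \<le> c \<bullet> b") (auto simp: inner_diff_left inner_add_left abs_if field_simps)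
  then show ?thesis unfolding cube_def set_eq_iff mem_box by auto
qed

lemma measure_cube:
  assumes "0 < s"
  shows "measure lborel (cube (c::'a::euclidean_space) s) = s ^ DIM('a)"
  using assms unfolding cube_eq_cbox measure_lborel_cbox_eq
  by (simp add: inner_diff_left inner_add_left algebra_simps)

lemma cube_inner_diff_le:
  assumes "x \<in> cube x0 l" "z \<in> cube x0 l" "b \<in> Basis"
  shows "\<bar>(x - z) \<bullet> b\<bar> \<le> l"
proof -
  have "\<bar>(x - x0) \<bullet> b\<bar> \<le> l / 2" "\<bar>(z - x0) \<bullet> b\<bar> \<le> l / 2"
    using assms unfolding cube_def by auto
  moreover have "(x - z) \<bullet> b = (x - x0) \<bullet> b - (z - x0) \<bullet> b"
    by (simp add: inner_diff_left)
  ultimately show ?thesis by linarith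
qed

lemma cube_measurable [measurable]: "cube c s \<in> sets borel"
  unfolding cube_eq_cbox by simp

lemma sum_abs_inner_diff_cube_le:
  fixes x z x0 :: "'a::euclidean_space"
  assumes "x \<in> cube x0 l" "z \<in> cube x0 l"
  shows "(\<Sum>b\<in>Basis. \<bar>(x - z) \<bullet> b\<bar>) \<le> real DIM('a) * l"
  using sum_mono[of Basis "\<lambda>b. \<bar>(x - z) \<bullet> b\<bar>" "\<lambda>_. l"] cube_inner_diff_le[OF assms] by simp

lemma nn_integral_cube_le_maximal_fn:
  fixes u :: "'a::euclidean_space \<Rightarrow> complex"
  assumes "0 < s" "x0 \<in> cube c s"
  shows "(\<integral>\<^sup>+ y. ennreal (norm (u y)) * indicator (cube c s) y \<partial>lborel) \<le> ennreal (s ^ DIM('a)) * maximal_fn u x0"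
proof -
  have "ennreal (1 / measure lborel (cube c s)) * (\<integral>\<^sup>+ y\<in>cube c s. ennreal (norm (u y)) \<partial>lborel) \<le> maximal_fn u x0"
    unfolding maximal_fn_def by (rule SUP_upper) (use assms in blast)
  then have "ennreal (1 / s ^ DIM('a)) * (\<integral>\<^sup>+ y\<in>cube c s. ennreal (norm (u y)) \<partial>lborel) \<le> maximal_fn u x0"
    by (simp only: measure_cube[OF assms(1)])
  then have "ennreal (s ^ DIM('a)) * (ennreal (1 / s ^ DIM('a)) * (\<integral>\<^sup>+ y\<in>cube c s. ennreal (norm (u y)) \<partial>lborel))
      \<le> ennreal (s ^ DIM('a)) * maximal_fn u x0"
    by (rule mult_left_mono) simp
  moreover have "ennreal (s ^ DIM('a)) * ennreal (1 / s ^ DIM('a)) = 1"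
    using assms(1) by (simp flip: ennreal_mult)
  ultimately show ?thesis by (simp add: mult.assoc[symmetric])
qed

definition decay_weight :: "'a::real_normed_vector \<Rightarrow> nat \<Rightarrow> 'a \<Rightarrow> real" where
  "decay_weight x0 M y = 1 / max 1 (norm (y - x0)) ^ M"

lemma decay_weight_nonneg: "0 \<le> decay_weight x0 M y"
  unfolding decay_weight_def by simp

lemma decay_weight_dyadic:
  fixes x0 y :: "'a::euclidean_space"
  shows "\<exists>k. y \<in> cube x0 (2 ^ (k + 1)) \<and> decay_weight x0 M y \<le> 2 ^ M * (1 / 2) ^ (k * M)"
proof -
  let ?r = "norm (y - x0)"
  define k where "k = (LEAST k::nat. ?r \<le> 2 ^ k)"
  have rk: "?r \<le> 2 ^ k"
    unfolding k_def by (rule LeastI_ex) (use real_arch_pow[of 2 ?r] in \<open>auto intro: less_imp_le\<close>)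
  have "y \<in> cube x0 (2 ^ (k + 1))"
    using order_trans[OF Basis_le_norm rk] by (auto simp: cube_def)
  moreover have "decay_weight x0 M y \<le> 2 ^ M * (1 / 2) ^ (k * M)"
  proof (cases k)
    case 0
    have "decay_weight x0 M y \<le> 1" unfolding decay_weight_def by (simp add: one_le_power)
    then show ?thesis using 0 by (simp add: one_le_power order_trans)
  next
    case (Suc k')
    have "\<not> ?r \<le> 2 ^ k'"
      using Suc not_less_Least[of k' "\<lambda>k. ?r \<le> 2 ^ k"] unfolding k_def by simp
    then have "(2 ^ k') ^ M \<le> max 1 ?r ^ M"
      by (intro power_mono) auto
    then have "decay_weight x0 M y \<le> 1 / (2 ^ k') ^ M"
      unfolding decay_weight_def by (intro divide_left_mono) auto
    also have "\<dots> = 2 ^ M * (1 / 2) ^ (k * M)"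
      using Suc by (simp add: power_mult[symmetric] power_divide power_add mult.commute field_simps)
    finally show ?thesis .
  qed
  ultimately show ?thesis by blast
qed

lemma nn_integral_decay_weight_le_maximal_fn:
  fixes u :: "'a::euclidean_space \<Rightarrow> complex"
  assumes [measurable]: "u \<in> borel_measurable lborel"
  shows "(\<integral>\<^sup>+ y. ennreal (norm (u y) * decay_weight x0 (DIM('a) + 1) y) \<partial>lborel)
     \<le> ennreal (2 ^ (2 * DIM('a) + 2)) * maximal_fn u x0"
proof -
  \<comment> \<open>Dominate the weight by a geometric sum of indicators of the dyadic cubes around \<open>x0\<close>.\<close>
  define n where "n = DIM('a)"
  define a where "a k = (2::real) ^ (n + 1) * (1 / 2) ^ (k * (n + 1))" for k :: nat
  define T where "T k y = ennreal (a k) * (ennreal (norm (u y)) * indicator (cube x0 (2 ^ (k + 1))) y)" for k y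
  have [measurable]: "T k \<in> borel_measurable borel" for k
    unfolding T_def by measurable
  have "ennreal (norm (u y) * decay_weight x0 (n + 1) y) \<le> (\<Sum>k. T k y)" for y
  proof -
    obtain k where k: "y \<in> cube x0 (2 ^ (k + 1))" "decay_weight x0 (n + 1) y \<le> a k"
      using decay_weight_dyadic[of y x0 "n + 1"] unfolding a_def by blast
    have "ennreal (norm (u y) * decay_weight x0 (n + 1) y) \<le> T k y"
      using k by (auto simp: T_def a_def mult.commute[of "norm (u y)"] ennreal_mult[symmetric]
                     intro!: ennreal_leI mult_right_mono)
    also have "\<dots> \<le> (\<Sum>k. T k y)"
      using sum_le_suminf[of "\<lambda>k. T k y" "{k}"] by (simp add: summableI)
    finally show ?thesis .
  qed
  then have "(\<integral>\<^sup>+ y. ennreal (norm (u y) * decay_weight x0 (n + 1) y) \<partial>lborel) \<le> (\<Sum>k. \<integral>\<^sup>+ y. T k y \<partial>lborel)"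
    by (subst nn_integral_suminf[symmetric]) (auto simp: T_def intro!: nn_integral_mono)
  also have "\<dots> \<le> (\<Sum>k. ennreal (2 ^ (2 * n + 1) * (1 / 2) ^ k) * maximal_fn u x0)"
  proof (intro suminf_le summableI)
    fix k
    have "(\<integral>\<^sup>+ y. T k y \<partial>lborel) = ennreal (a k) * (\<integral>\<^sup>+ y. ennreal (norm (u y)) * indicator (cube x0 (2 ^ (k + 1))) y \<partial>lborel)"
      unfolding T_def by (rule nn_integral_cmult) simp
    also have "\<dots> \<le> ennreal (a k) * (ennreal ((2 ^ (k + 1)) ^ n) * maximal_fn u x0)"
      unfolding n_def by (intro mult_left_mono nn_integral_cube_le_maximal_fn) (auto simp: cube_def)
    also have "\<dots> = ennreal (a k * (2 ^ (k + 1)) ^ n) * maximal_fn u x0"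
      by (subst ennreal_mult) (auto simp: a_def mult.assoc)
    also have "a k * (2 ^ (k + 1)) ^ n = 2 ^ (2 * n + 1) * (1 / 2) ^ k * ((1 / 2) ^ (k * n) * 2 ^ (k * n))"
      unfolding a_def by (simp add: power_add power_mult_distrib power_mult[symmetric] algebra_simps mult_2_right)
    also have "(1 / 2 :: real) ^ (k * n) * 2 ^ (k * n) = 1"
      by (simp flip: power_mult_distrib)
    finally show "(\<integral>\<^sup>+ y. T k y \<partial>lborel) \<le> ennreal (2 ^ (2 * n + 1) * (1 / 2) ^ k) * maximal_fn u x0"
      by simp
  qed
  also have "\<dots> = ennreal (2 ^ (2 * n + 1) * 2) * maximal_fn u x0"
    using sums_mult[OF geometric_sums[of "1 / 2 :: real"], of "2 ^ (2 * n + 1)"]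
    by (subst ennreal_suminf_multc, subst suminf_ennreal_eq) auto
  also have "(2::real) ^ (2 * n + 1) * 2 = 2 ^ (2 * DIM('a) + 2)"
    by (simp add: n_def)
  finally show ?thesis unfolding n_def .
qed

lemma nn_integral_le_maximal_fn:
  fixes u D :: "'a::euclidean_space \<Rightarrow> complex"
  assumes u: "u \<in> borel_measurable lborel"
    and D: "AE y in lborel. norm (D y) \<le> K * decay_weight x0 (DIM('a) + 1) y" and K: "0 \<le> K"
  shows "(\<integral>\<^sup>+ y. ennreal (norm (u y) * norm (D y)) \<partial>lborel) \<le> ennreal (K * 2 ^ (2 * DIM('a) + 2)) * maximal_fn u x0"
proof -
  have "(\<integral>\<^sup>+ y. ennreal (norm (u y) * norm (D y)) \<partial>lborel)
      \<le> (\<integral>\<^sup>+ y. ennreal K * ennreal (norm (u y) * decay_weight x0 (DIM('a) + 1) y) \<partial>lborel)"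
  proof (rule nn_integral_mono_AE)
    show "AE y in lborel. ennreal (norm (u y) * norm (D y)) \<le> ennreal K * ennreal (norm (u y) * decay_weight x0 (DIM('a) + 1) y)"
      using D
    proof eventually_elim
      case (elim y)
      then have "norm (u y) * norm (D y) \<le> K * (norm (u y) * decay_weight x0 (DIM('a) + 1) y)"
        using mult_left_mono[OF elim, of "norm (u y)"] by (simp add: mult_ac)
      then show ?case
        using K decay_weight_nonneg[of x0 "DIM('a) + 1" y] by (simp add: ennreal_leI flip: ennreal_mult)
    qed
  qed
  also have "\<dots> = ennreal K * (\<integral>\<^sup>+ y. ennreal (norm (u y) * decay_weight x0 (DIM('a) + 1) y) \<partial>lborel)"
    using u by (intro nn_integral_cmult) (simp add: decay_weight_def)
  also have "\<dots> \<le> ennreal K * (ennreal (2 ^ (2 * DIM('a) + 2)) * maximal_fn u x0)"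
    by (intro mult_left_mono nn_integral_decay_weight_le_maximal_fn u) simp
  finally show ?thesis
    using K by (simp add: ennreal_mult mult.assoc)
qed

lemma schwartz_borel_measurable: "schwartz u \<Longrightarrow> u \<in> borel_measurable lborel"
  unfolding schwartz_def by (auto intro: borel_measurable_continuous_onI smooth_fn_continuous)

lemma maximal_fn_estimate_of_pointwise:
  fixes D :: "nat \<Rightarrow> 'a \<Rightarrow> 'a \<Rightarrow> 'a::euclidean_space \<Rightarrow> complex"
  assumes K: "0 \<le> K"
    and D: "\<And>x0 l j x z. 0 < l \<Longrightarrow> l < 1 \<Longrightarrow> 1 \<le> j \<Longrightarrow> x \<in> cube x0 l \<Longrightarrow> z \<in> cube x0 l \<Longrightarrow>
              AE y in lborel. norm (D j x z y) \<le> K * 2 ^ j * l * decay_weight x0 (DIM('a) + 1) y"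
  shows "\<exists>C. \<forall>u x0 l j x z. schwartz u \<longrightarrow> 0 < l \<longrightarrow> l < 1 \<longrightarrow> 1 \<le> j \<longrightarrow>
           x \<in> cube x0 l \<longrightarrow> z \<in> cube x0 l \<longrightarrow>
           (\<integral>\<^sup>+ y. ennreal (norm (u y) * norm (D j x z y)) \<partial>lborel) \<le> ennreal (C * 2 ^ j * l) * maximal_fn u x0"
proof (intro exI allI impI)
  fix u :: "'a \<Rightarrow> complex" and x0 :: 'a and l :: real and j :: nat and x z :: 'a
  assume "schwartz u" "0 < l" "l < 1" "1 \<le> j" "x \<in> cube x0 l" "z \<in> cube x0 l"
  then have "(\<integral>\<^sup>+ y. ennreal (norm (u y) * norm (D j x z y)) \<partial>lborel)
      \<le> ennreal (K * 2 ^ j * l * 2 ^ (2 * DIM('a) + 2)) * maximal_fn u x0"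
    using K by (intro nn_integral_le_maximal_fn schwartz_borel_measurable D) auto
  then show "(\<integral>\<^sup>+ y. ennreal (norm (u y) * norm (D j x z y)) \<partial>lborel)
      \<le> ennreal (K * 2 ^ (2 * DIM('a) + 2) * 2 ^ j * l) * maximal_fn u x0"
    by (simp add: mult_ac)
qed

section \<open>The Littlewood--Paley cut-offs\<close>

lemma finite_uniform_bound:
  assumes "finite A" "\<forall>a\<in>A. \<exists>M::real. Q a M" "\<And>a M M'. Q a M \<Longrightarrow> M \<le> M' \<Longrightarrow> Q a M'"
  shows "\<exists>M\<ge>0. \<forall>a\<in>A. Q a M"
proof -
  obtain M where M: "\<forall>a\<in>A. Q a (M a)"
    using bchoice[OF assms(2)] by blast
  have "Q a (\<Sum>a\<in>A. \<bar>M a\<bar>)" if "a \<in> A" for a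
  proof (rule assms(3)[OF M[rule_format, OF that]])
    have "M a \<le> \<bar>M a\<bar>" by simp
    also have "\<dots> \<le> (\<Sum>a\<in>A. \<bar>M a\<bar>)"
      by (rule member_le_sum[OF that _ assms(1)]) simp
    finally show "M a \<le> (\<Sum>a\<in>A. \<bar>M a\<bar>)" .
  qed
  moreover have "0 \<le> (\<Sum>a\<in>A. \<bar>M a\<bar>)"
    by (simp add: sum_nonneg)
  ultimately show ?thesis by blast
qed

definition annulus :: "real \<Rightarrow> nat \<Rightarrow> 'a::real_normed_vector set" where
  "annulus C0 j = {\<xi>. 2 ^ j / C0 \<le> norm \<xi> \<and> norm \<xi> \<le> 2 * C0 * 2 ^ j}"

definition lp_cutoff :: "('a::real_normed_vector \<Rightarrow> real) \<Rightarrow> nat \<Rightarrow> 'a \<Rightarrow> complex" where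
  "lp_cutoff psi j = (\<lambda>\<xi>. complex_of_real (psi ((2 powr - real j) *\<^sub>R \<xi>)))"

lemma piece_eq_lp_cutoff: "j \<noteq> 0 \<Longrightarrow> piece psim1 psi a j x = (\<lambda>\<xi>. a x \<xi> * lp_cutoff psi j \<xi>)"
  unfolding piece_def lp_cutoff_def by (simp add: fun_eq_iff)

lemma two_powr_neg_nat: "(2::real) powr - real j = inverse (2 ^ j)"
  by (simp add: powr_minus powr_realpow)

lemma dpd_iter_lp_cutoff:
  assumes "smooth_fn psi" "e \<in> Basis"
  shows "dpd_iter e k (lp_cutoff psi j) =
    (\<lambda>\<xi>. complex_of_real ((2 powr - real j) ^ k * dpd_iter e k psi ((2 powr - real j) *\<^sub>R \<xi>)))"
    "dpd_smooth e (lp_cutoff psi j)"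
  unfolding lp_cutoff_def
  using dpd_iter_scale_of_real dpd_smooth_scale_of_real smooth_fn_dpd_smooth(1)[OF assms] by blast+

context
  fixes C0 :: real and psim1 psi :: "'a::euclidean_space \<Rightarrow> real"
  assumes LP: "LP_data C0 psim1 psi"
begin

lemma LP_data_C0: "1 \<le> C0"
  using LP unfolding LP_data_def by simp

lemma dpd_iter_psi_eq_0:
  assumes "\<xi> \<notin> closure {\<xi>. psi \<xi> \<noteq> 0}"
  shows "dpd_iter e k psi \<xi> = 0"
  by (rule dpd_iter_eq_0_on_open[of "- closure {\<xi>. psi \<xi> \<noteq> 0}"])
     (use assms closure_subset[of "{\<xi>. psi \<xi> \<noteq> 0}"] in auto)

lemma dpd_iter_lp_cutoff_bounded:
  assumes "e \<in> Basis"
  shows "\<exists>M. \<forall>\<xi> j. norm (dpd_iter e k (lp_cutoff psi j) \<xi>) \<le> M"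
proof -
  have sm: "smooth_fn psi" using LP unfolding LP_data_def by simp
  let ?K = "closure {\<xi>. psi \<xi> \<noteq> 0}"
  have "?K \<subseteq> cball 0 (2 * C0)"
    using LP unfolding LP_data_def by auto
  then have "compact ?K"
    unfolding compact_eq_bounded_closed by (auto intro: bounded_subset[OF bounded_cball])
  then have "bounded (dpd_iter e k psi ` ?K)"
    by (intro compact_imp_bounded compact_continuous_image continuous_on_subset[OF smooth_fn_dpd_smooth(2)[OF sm assms]]) auto
  then obtain M where M: "\<And>\<xi>. \<xi> \<in> ?K \<Longrightarrow> \<bar>dpd_iter e k psi \<xi>\<bar> \<le> M"
    unfolding bounded_iff by auto
  have "norm (dpd_iter e k (lp_cutoff psi j) \<xi>) \<le> \<bar>M\<bar>" for \<xi> j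
  proof -
    let ?s = "(2::real) powr - real j"
    have s: "0 < ?s" "?s \<le> 1"
      by (auto simp: two_powr_neg_nat inverse_le_1_iff)
    have "\<bar>dpd_iter e k psi \<eta>\<bar> \<le> \<bar>M\<bar>" for \<eta>
      using M[of \<eta>] dpd_iter_psi_eq_0[of \<eta> e k] by (cases "\<eta> \<in> ?K") auto
    then have "?s ^ k * \<bar>dpd_iter e k psi (?s *\<^sub>R \<xi>)\<bar> \<le> 1 * \<bar>M\<bar>"
      using s by (intro mult_mono power_le_one) auto
    then show ?thesis
      using s unfolding dpd_iter_lp_cutoff(1)[OF sm assms] by (simp add: abs_mult norm_mult norm_power)
  qed
  then show ?thesis by blast
qed

lemma dpd_iter_lp_cutoff_uniform_bound:
  "\<exists>M\<ge>0. \<forall>p\<in>Basis \<times> {..m}. \<forall>\<xi> j. norm (dpd_iter (fst p) (snd p) (lp_cutoff psi j) \<xi>) \<le> M"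
  by (rule finite_uniform_bound) (auto intro: dpd_iter_lp_cutoff_bounded order_trans)

lemma dpd_iter_lp_cutoff_eq_0:
  assumes "\<xi> \<notin> annulus C0 j"
  shows "dpd_iter e k (lp_cutoff psi j) \<xi> = 0"
proof -
  let ?s = "(2::real) powr - real j"
  have s: "0 < ?s" by simp
  have "?s *\<^sub>R \<xi> \<notin> closure {\<xi>. psi \<xi> \<noteq> 0}"
  proof
    assume "?s *\<^sub>R \<xi> \<in> closure {\<xi>. psi \<xi> \<noteq> 0}"
    then have "inverse C0 \<le> ?s * norm \<xi>" "?s * norm \<xi> \<le> 2 * C0"
      using LP s unfolding LP_data_def by auto
    then show False
      using assms LP_data_C0 unfolding annulus_def two_powr_neg_nat by (auto simp: field_simps)
  qed
  then show ?thesis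
  proof (intro dpd_iter_eq_0_on_open[of "(\<lambda>x. ?s *\<^sub>R x) -` (- closure {\<xi>. psi \<xi> \<noteq> 0})"])
    show "open ((\<lambda>x. ?s *\<^sub>R x) -` (- closure {\<xi>. psi \<xi> \<noteq> 0}))"
      by (intro open_vimage continuous_on_scaleR continuous_on_const continuous_on_id) auto
    show "lp_cutoff psi j x = 0" if "x \<in> (\<lambda>x. ?s *\<^sub>R x) -` (- closure {\<xi>. psi \<xi> \<noteq> 0})" for x
      using that closure_subset[of "{\<xi>. psi \<xi> \<noteq> 0}"] by (auto simp: lp_cutoff_def)
  qed simp
qed

lemma cont_supp_cball_lp_cutoff: "cont_supp_cball (2 * C0 * 2 ^ j) (lp_cutoff psi j)"
proof -
  have "continuous_on UNIV psi"
    using LP unfolding LP_data_def by (simp add: smooth_fn_continuous)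
  then have "continuous_on UNIV (\<lambda>\<xi>. psi ((2 powr - real j) *\<^sub>R \<xi>))"
    by (rule continuous_on_compose2) (auto intro: continuous_on_scaleR continuous_on_const continuous_on_id)
  then have "continuous_on UNIV (lp_cutoff psi j)"
    unfolding lp_cutoff_def by (rule continuous_on_of_real)
  moreover have "lp_cutoff psi j \<xi> = 0" if "2 * C0 * 2 ^ j < norm \<xi>" for \<xi>
    using dpd_iter_lp_cutoff_eq_0[of \<xi> j _ 0] that by (auto simp: annulus_def)
  ultimately show ?thesis unfolding cont_supp_cball_def by blast
qed

lemma norm_dpd_iter_mult_lp_cutoff_le:
  assumes e: "e \<in> Basis" and f: "dpd_smooth e f"
    and Mp: "\<And>i \<xi>. i \<le> m \<Longrightarrow> norm (dpd_iter e i (lp_cutoff psi j) \<xi>) \<le> Mp"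
    and F: "\<And>i. i \<le> m \<Longrightarrow> \<xi> \<in> annulus C0 j \<Longrightarrow> norm (dpd_iter e i f \<xi>) \<le> F" and F0: "0 \<le> F"
  shows "norm (dpd_iter e m (\<lambda>\<xi>. f \<xi> * lp_cutoff psi j \<xi>) \<xi>) \<le> 2 ^ m * F * Mp"
proof -
  have Mp0: "0 \<le> Mp" using Mp[of 0] order_trans[OF norm_ge_zero] by blast
  have smooth: "dpd_smooth e (lp_cutoff psi j)"
    using LP e unfolding LP_data_def by (simp add: dpd_iter_lp_cutoff(2))
  show ?thesis
  proof (cases "\<xi> \<in> annulus C0 j")
    case True
    have "norm (dpd_iter e m (\<lambda>\<xi>. f \<xi> * lp_cutoff psi j \<xi>) \<xi>) \<le> (\<Sum>i = 0..m. real (m choose i) * F * Mp)"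
      by (rule norm_dpd_iter_mult_le[OF f smooth]) (use F True Mp in auto)
    also have "\<dots> = (\<Sum>i = 0..m. real (m choose i)) * F * Mp"
      by (simp add: sum_distrib_right)
    also have "(\<Sum>i = 0..m. real (m choose i)) = 2 ^ m"
      using choose_row_sum[of m] by (simp add: atMost_atLeast0 flip: of_nat_sum)
    finally show ?thesis .
  next
    case False
    have "norm (dpd_iter e m (\<lambda>\<xi>. f \<xi> * lp_cutoff psi j \<xi>) \<xi>) \<le> (\<Sum>i = 0..m. real (m choose i) * norm (dpd_iter e i f \<xi>) * 0)"
      by (rule norm_dpd_iter_mult_le[OF f smooth]) (use dpd_iter_lp_cutoff_eq_0[OF False] in auto)
    then show ?thesis using F0 Mp0 by simp
  qed
qed

end

section \<open>Symbol estimates\<close>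

lemma jbr_ge_norm: "norm \<xi> \<le> jbr \<xi>"
  unfolding jbr_def by (rule real_le_rsqrt) simp

lemma jbr_ge_1: "1 \<le> jbr \<xi>"
  unfolding jbr_def by simp

lemma jbr_le: "jbr \<xi> \<le> 1 + norm \<xi>"
proof -
  have "jbr \<xi> \<le> sqrt ((1 + norm \<xi>)\<^sup>2)"
    unfolding jbr_def by (rule real_sqrt_le_mono) (simp add: power2_eq_square algebra_simps)
  then show ?thesis by simp
qed

lemma continuous_on_jbr_powr: "continuous_on UNIV (\<lambda>\<xi>::'a::real_normed_vector. C * jbr \<xi> powr r)"
proof -
  have "continuous_on UNIV (\<lambda>\<xi>::'a. jbr \<xi>)"
    unfolding jbr_def by (intro continuous_intros)
  moreover have "jbr \<xi> \<noteq> 0" for \<xi> :: 'a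
    using jbr_ge_1[of \<xi>] by auto
  ultimately show ?thesis
    by (intro continuous_on_mult continuous_on_const continuous_on_powr) auto
qed

lemma jbr_powr_neg_annulus_le:
  assumes "\<xi> \<in> annulus C0 j" "0 < C0"
  shows "jbr \<xi> powr (- real n) \<le> C0 ^ n / 2 ^ (j * n)"
proof -
  have p: "0 < 2 ^ j / C0" using assms by simp
  have "2 ^ j / C0 \<le> jbr \<xi>" using assms(1) jbr_ge_norm[of \<xi>] unfolding annulus_def by auto
  then have "jbr \<xi> powr (- real n) \<le> (2 ^ j / C0) powr (- real n)"
    using powr_mono2'[of "- real n" "2 ^ j / C0" "jbr \<xi>"] p by simp
  also have "\<dots> = C0 ^ n / 2 ^ (j * n)"
    using p assms(2) by (simp add: powr_minus powr_realpow power_divide power_mult)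
  finally show ?thesis .
qed

lemma jbr_powr_annulus_le:
  assumes "\<xi> \<in> annulus C0 j" "1 \<le> C0" "0 \<le> \<delta>" "\<delta> \<le> 1"
  shows "jbr \<xi> powr (\<delta> - real n) \<le> (1 + 2 * C0) * 2 ^ j * (C0 ^ n / 2 ^ (j * n))"
proof -
  have j1: "1 \<le> jbr \<xi>" by (rule jbr_ge_1)
  have "jbr \<xi> powr \<delta> \<le> jbr \<xi> powr 1" by (rule powr_mono[OF assms(4) j1])
  also have "\<dots> \<le> 1 + 2 * C0 * 2 ^ j" using assms(1) jbr_le[of \<xi>] j1 unfolding annulus_def by simp
  also have "\<dots> \<le> (1 + 2 * C0) * 2 ^ j" by (simp add: algebra_simps)
  finally have "jbr \<xi> powr \<delta> \<le> (1 + 2 * C0) * 2 ^ j" .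
  then have "jbr \<xi> powr \<delta> * jbr \<xi> powr (- real n) \<le> (1 + 2 * C0) * 2 ^ j * (C0 ^ n / 2 ^ (j * n))"
    by (rule mult_mono[OF _ jbr_powr_neg_annulus_le[OF assms(1)]]) (use assms in auto)
  then show ?thesis using j1 by (simp add: powr_add[symmetric])
qed

context
  fixes a :: "'a::euclidean_space \<Rightarrow> 'a \<Rightarrow> complex" and m \<rho> \<delta> :: real
  assumes symb: "symbol_S m \<rho> \<delta> a"
begin

lemma symbol_S_smooth_fn: "smooth_fn (a x)"
  using symb unfolding symbol_S_def by (auto intro: smooth_fn_slice)

lemma symbol_S_xi_bound:
  assumes "e \<in> Basis"
  shows "\<exists>C. \<forall>x \<xi>. norm (dpd_iter e i (a x) \<xi>) \<le> C * jbr \<xi> powr (m - \<rho> * real i)"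
  using symb[unfolded symbol_S_def, THEN conjunct2, rule_format, of "[]" "replicate i e"] assms
  by (simp add: dpd_iter_slice set_replicate_conv_if)

lemma symbol_S_x_dpd:
  assumes "e \<in> Basis" "b \<in> Basis"
  shows "dpd_differentiable b (\<lambda>x. dpd_iter e i (a x) \<xi>)"
    "\<exists>C. \<forall>x \<xi>. norm (dpd b (\<lambda>x. dpd_iter e i (a x) \<xi>) x) \<le> C * jbr \<xi> powr (m - \<rho> * real i + \<delta>)"
proof -
  let ?A = "\<lambda>(x, \<xi>). a x \<xi>" and ?vs = "map (\<lambda>b. (0::'a, b)) (replicate i e)"
  have vs: "set ?vs \<subseteq> Basis" and b: "(b, 0) \<in> (Basis :: ('a \<times> 'a) set)"
    using assms by (auto simp: Basis_prod_def)
  have "(\<lambda>t. dpds ?vs ?A ((x, \<xi>) + t *\<^sub>R (b, 0))) differentiable (at 0)" for x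
    using symb vs b unfolding symbol_S_def smooth_fn_def by blast
  then show "dpd_differentiable b (\<lambda>x. dpd_iter e i (a x) \<xi>)"
    unfolding dpd_differentiable_def by (simp add: dpd_iter_slice)
  have "dpd b (\<lambda>x. dpd_iter e i (a x) \<xi>) x = dpds ((b, 0) # ?vs) ?A (x, \<xi>)" for x \<xi>
    by (simp add: dpd_iter_slice dpd_fst_slice)
  then show "\<exists>C. \<forall>x \<xi>. norm (dpd b (\<lambda>x. dpd_iter e i (a x) \<xi>) x) \<le> C * jbr \<xi> powr (m - \<rho> * real i + \<delta>)"
    using symb[unfolded symbol_S_def, THEN conjunct2, rule_format, of "[b]" "replicate i e"] assms
    by (simp add: set_replicate_conv_if)
qed

lemma symbol_S_x_lipschitz:
  assumes "e \<in> Basis"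
  shows "\<exists>C. \<forall>x z \<xi>. norm (dpd_iter e i (a x) \<xi> - dpd_iter e i (a z) \<xi>)
           \<le> C * jbr \<xi> powr (m - \<rho> * real i + \<delta>) * (\<Sum>b\<in>Basis. \<bar>(x - z) \<bullet> b\<bar>)"
proof -
  have "\<forall>b\<in>Basis. \<exists>C. \<forall>x \<xi>. norm (dpd b (\<lambda>x. dpd_iter e i (a x) \<xi>) x) \<le> C * jbr \<xi> powr (m - \<rho> * real i + \<delta>)"
    using symbol_S_x_dpd(2)[OF assms] by blast
  from finite_uniform_bound[OF finite_Basis this] obtain C where
    C: "\<And>b x \<xi>. b \<in> Basis \<Longrightarrow> norm (dpd b (\<lambda>x. dpd_iter e i (a x) \<xi>) x) \<le> C * jbr \<xi> powr (m - \<rho> * real i + \<delta>)"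
    by (fastforce intro: order_trans mult_right_mono)
  have "norm (dpd_iter e i (a x) \<xi> - dpd_iter e i (a z) \<xi>)
      \<le> C * jbr \<xi> powr (m - \<rho> * real i + \<delta>) * (\<Sum>b\<in>Basis. \<bar>(x - z) \<bullet> b\<bar>)" for x z \<xi>
    by (rule norm_diff_le_sum_Basis_dpd_bound[where G = "\<lambda>x. dpd_iter e i (a x) \<xi>"])
       (use symbol_S_x_dpd(1)[OF assms] C in auto)
  then show ?thesis by blast
qed


lemma symbol_S_uniform_xi_bound:
  "\<exists>C\<ge>0. \<forall>e\<in>Basis. \<forall>i\<le>N. \<forall>x \<xi>. norm (dpd_iter e i (a x) \<xi>) \<le> C * jbr \<xi> powr (m - \<rho> * real i)"
proof -
  have "\<exists>C\<ge>0. \<forall>p\<in>Basis \<times> {..N}. \<forall>x \<xi>.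
      norm (dpd_iter (fst p) (snd p) (a x) \<xi>) \<le> C * jbr \<xi> powr (m - \<rho> * real (snd p))"
  proof (rule finite_uniform_bound)
    show "\<forall>p\<in>Basis \<times> {..N}. \<exists>C. \<forall>x \<xi>. norm (dpd_iter (fst p) (snd p) (a x) \<xi>) \<le> C * jbr \<xi> powr (m - \<rho> * real (snd p))"
      using symbol_S_xi_bound by auto
  qed (fastforce intro: order_trans mult_right_mono)+
  then show ?thesis by fastforce
qed

lemma symbol_S_uniform_x_lipschitz:
  "\<exists>C\<ge>0. \<forall>e\<in>Basis. \<forall>i\<le>N. \<forall>x z \<xi>. norm (dpd_iter e i (a x) \<xi> - dpd_iter e i (a z) \<xi>)
     \<le> C * jbr \<xi> powr (m - \<rho> * real i + \<delta>) * (\<Sum>b\<in>Basis. \<bar>(x - z) \<bullet> b\<bar>)"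
proof -
  have "\<exists>C\<ge>0. \<forall>p\<in>Basis \<times> {..N}. \<forall>x z \<xi>. norm (dpd_iter (fst p) (snd p) (a x) \<xi> - dpd_iter (fst p) (snd p) (a z) \<xi>)
      \<le> C * jbr \<xi> powr (m - \<rho> * real (snd p) + \<delta>) * (\<Sum>b\<in>Basis. \<bar>(x - z) \<bullet> b\<bar>)"
  proof (rule finite_uniform_bound)
    show "\<forall>p\<in>Basis \<times> {..N}. \<exists>C. \<forall>x z \<xi>. norm (dpd_iter (fst p) (snd p) (a x) \<xi> - dpd_iter (fst p) (snd p) (a z) \<xi>)
      \<le> C * jbr \<xi> powr (m - \<rho> * real (snd p) + \<delta>) * (\<Sum>b\<in>Basis. \<bar>(x - z) \<bullet> b\<bar>)"
      using symbol_S_x_lipschitz by auto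
  qed (fastforce intro: order_trans mult_right_mono sum_nonneg)+
  then show ?thesis by fastforce
qed

end

lemma le_on_dense_imp_le:
  fixes f g :: "'a::topological_space \<Rightarrow> real"
  assumes "continuous_on UNIV f" "continuous_on UNIV g"
    and dense: "\<And>U. open U \<Longrightarrow> U \<noteq> {} \<Longrightarrow> \<exists>d\<in>D. d \<in> U" and le: "\<And>d. d \<in> D \<Longrightarrow> f d \<le> g d"
  shows "f x \<le> g x"
proof (rule ccontr)
  assume "\<not> f x \<le> g x"
  moreover have "open {\<xi>. g \<xi> < f \<xi>}"
    by (rule open_Collect_less[OF assms(2,1)])
  ultimately have "\<exists>d\<in>D. d \<in> {\<xi>. g \<xi> < f \<xi>}"
    by (intro dense) (auto simp: not_le)
  then obtain d where "d \<in> D" "g d < f d"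
    by blast
  then show False using le by force
qed

context
  fixes a :: "'a::euclidean_space \<Rightarrow> 'a \<Rightarrow> complex" and m \<rho> :: real
  assumes symb: "symbol_LinfS m \<rho> a"
begin

lemma symbol_LinfS_smooth_fn: "smooth_fn (a x)"
  using symb unfolding symbol_LinfS_def by simp

lemma symbol_LinfS_uniform_bound:
  "\<exists>C\<ge>0. \<forall>e\<in>Basis. \<forall>i\<le>N. \<forall>\<xi>. AE y in lborel. norm (dpd_iter e i (a y) \<xi>) \<le> C * jbr \<xi> powr (m - \<rho> * real i)"
proof -
  have "\<exists>C\<ge>0. \<forall>p\<in>Basis \<times> {..N}. \<forall>\<xi>. AE y in lborel.
      norm (dpd_iter (fst p) (snd p) (a y) \<xi>) \<le> C * jbr \<xi> powr (m - \<rho> * real (snd p))"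
  proof (rule finite_uniform_bound)
    show "\<forall>p\<in>Basis \<times> {..N}. \<exists>C. \<forall>\<xi>. AE y in lborel.
        norm (dpd_iter (fst p) (snd p) (a y) \<xi>) \<le> C * jbr \<xi> powr (m - \<rho> * real (snd p))"
    proof
      fix p :: "'a \<times> nat" assume "p \<in> Basis \<times> {..N}"
      then have "set (replicate (snd p) (fst p)) \<subseteq> Basis" by (auto simp: set_replicate_conv_if)
      then show "\<exists>C. \<forall>\<xi>. AE y in lborel. norm (dpd_iter (fst p) (snd p) (a y) \<xi>) \<le> C * jbr \<xi> powr (m - \<rho> * real (snd p))"
        using symb unfolding symbol_LinfS_def dpd_iter_def by force
    qed
  next
    fix p C C' assume bound: "\<forall>\<xi>. AE y in lborel. norm (dpd_iter (fst p) (snd p) (a y) \<xi>) \<le> C * jbr \<xi> powr (m - \<rho> * real (snd p))"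
      and "C \<le> C'"
    show "\<forall>\<xi>. AE y in lborel. norm (dpd_iter (fst p) (snd p) (a y) \<xi>) \<le> C' * jbr \<xi> powr (m - \<rho> * real (snd p))"
    proof
      fix \<xi> :: 'a
      have mono: "C * jbr \<xi> powr (m - \<rho> * real (snd p)) \<le> C' * jbr \<xi> powr (m - \<rho> * real (snd p))"
        using \<open>C \<le> C'\<close> by (intro mult_right_mono) auto
      show "AE y in lborel. norm (dpd_iter (fst p) (snd p) (a y) \<xi>) \<le> C' * jbr \<xi> powr (m - \<rho> * real (snd p))"
        using bound[rule_format, of \<xi>] by eventually_elim (use mono in linarith)
    qed
  qed simp
  then show ?thesis by fastforce
qed

lemma symbol_LinfS_AE_bound:
  "\<exists>C\<ge>0. AE y in lborel. \<forall>e\<in>Basis. \<forall>i\<le>N. \<forall>\<xi>. norm (dpd_iter e i (a y) \<xi>) \<le> C * jbr \<xi> powr (m - \<rho> * real i)"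
proof -
  obtain C where C0: "0 \<le> C"
    and C: "\<And>e i \<xi>. e \<in> Basis \<Longrightarrow> i \<le> N \<Longrightarrow> AE y in lborel. norm (dpd_iter e i (a y) \<xi>) \<le> C * jbr \<xi> powr (m - \<rho> * real i)"
    using symbol_LinfS_uniform_bound[of N] by blast
  \<comment> \<open>The bounds hold a.e. for each fixed \<open>\<xi>\<close>; by continuity in \<open>\<xi>\<close> it suffices to take
    countably many \<open>\<xi>\<close>.\<close>
  obtain D :: "'a set" where D: "countable D" "\<And>U. open U \<Longrightarrow> U \<noteq> {} \<Longrightarrow> \<exists>d\<in>D. d \<in> U"
    using countable_dense_exists by blast
  have "AE y in lborel. \<forall>e\<in>Basis. \<forall>i\<in>{..N}. \<forall>\<xi>\<in>D. norm (dpd_iter e i (a y) \<xi>) \<le> C * jbr \<xi> powr (m - \<rho> * real i)"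
    using C by (simp add: AE_ball_countable[OF countable_finite] AE_ball_countable[OF D(1)])
  then have "AE y in lborel. \<forall>e\<in>Basis. \<forall>i\<le>N. \<forall>\<xi>. norm (dpd_iter e i (a y) \<xi>) \<le> C * jbr \<xi> powr (m - \<rho> * real i)"
  proof eventually_elim
    case (elim y)
    show ?case
    proof (intro ballI allI impI)
      fix e :: 'a and i and \<xi> :: 'a assume e: "e \<in> Basis" and i: "i \<le> N"
      show "norm (dpd_iter e i (a y) \<xi>) \<le> C * jbr \<xi> powr (m - \<rho> * real i)"
      proof (rule le_on_dense_imp_le[OF _ continuous_on_jbr_powr D(2)])
        show "continuous_on UNIV (\<lambda>\<xi>. norm (dpd_iter e i (a y) \<xi>))"
          by (rule continuous_on_norm[OF smooth_fn_dpd_smooth(2)[OF symbol_LinfS_smooth_fn e]])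
        show "norm (dpd_iter e i (a y) d) \<le> C * jbr d powr (m - \<rho> * real i)" if "d \<in> D" for d
          using elim e i that by blast
      qed auto
    qed
  qed
  then show ?thesis using C0 by (intro exI[of _ C]) (auto elim!: AE_mp)
qed

end

section \<open>The kernel estimate\<close>

lemma abs_power_diff_le:
  fixes a b :: real
  assumes "\<bar>a\<bar> \<le> 1" "\<bar>b\<bar> \<le> 1"
  shows "\<bar>a ^ r - b ^ r\<bar> \<le> real r * \<bar>a - b\<bar>"
proof (induction r)
  case (Suc r)
  have "\<bar>a ^ Suc r - b ^ Suc r\<bar> = \<bar>a * (a ^ r - b ^ r) + b ^ r * (a - b)\<bar>"
    by (simp add: algebra_simps)
  also have "\<dots> \<le> \<bar>a\<bar> * \<bar>a ^ r - b ^ r\<bar> + \<bar>b\<bar> ^ r * \<bar>a - b\<bar>"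
    by (metis abs_mult abs_triangle_ineq power_abs)
  also have "\<dots> \<le> 1 * (real r * \<bar>a - b\<bar>) + 1 * \<bar>a - b\<bar>"
    using assms Suc by (intro add_mono mult_mono power_le_one) auto
  finally show ?case by (simp add: algebra_simps)
qed simp

lemma norm_exp_i_minus_1_le: "norm (exp (\<i> * complex_of_real t) - 1) \<le> \<bar>t\<bar>"
proof -
  let ?g = "\<lambda>x::real. exp (\<i> * complex_of_real x)"
  have "dpd_differentiable 1 ?g" "dpd 1 ?g = (\<lambda>x. \<i> * ?g x)"
    using dpd_exp[where w = "1::real" and e = 1] by (simp_all add: inner_real_def)
  then have "norm (?g 0 - ?g (0 + t *\<^sub>R 1)) \<le> 1 * \<bar>t\<bar>"
    by (intro norm_diff_le_dpd_bound) (simp_all add: norm_mult)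
  then show ?thesis by (simp add: norm_minus_commute)
qed

lemma norm_exp_inner_diff_le:
  fixes v u \<xi> :: "'a::real_inner"
  shows "norm (exp (\<i> * complex_of_real (v \<bullet> \<xi>)) - exp (\<i> * complex_of_real (u \<bullet> \<xi>))) \<le> norm (v - u) * norm \<xi>"
proof -
  have "exp (\<i> * complex_of_real (v \<bullet> \<xi>)) - exp (\<i> * complex_of_real (u \<bullet> \<xi>)) =
      exp (\<i> * complex_of_real (u \<bullet> \<xi>)) * (exp (\<i> * complex_of_real ((v - u) \<bullet> \<xi>)) - 1)"
    by (simp add: inner_diff_left right_diff_distrib diff_divide_distrib flip: exp_add)
  then have "norm (exp (\<i> * complex_of_real (v \<bullet> \<xi>)) - exp (\<i> * complex_of_real (u \<bullet> \<xi>))) =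
      norm (exp (\<i> * complex_of_real ((v - u) \<bullet> \<xi>)) - 1)"
    by (simp add: norm_mult)
  also have "\<dots> \<le> \<bar>(v - u) \<bullet> \<xi>\<bar>"
    by (rule norm_exp_i_minus_1_le)
  also have "\<dots> \<le> norm (v - u) * norm \<xi>"
    by (rule Cauchy_Schwarz_ineq2)
  finally show ?thesis .
qed

lemma norm_dpd_iter_exp_inner_diff_le:
  fixes v u \<xi> :: "'a::real_inner"
  assumes "\<bar>u \<bullet> e\<bar> \<le> 1" "\<bar>v \<bullet> e\<bar> \<le> 1"
  shows "norm (dpd_iter e r (\<lambda>\<xi>. exp (\<i> * complex_of_real (v \<bullet> \<xi>)) - exp (\<i> * complex_of_real (u \<bullet> \<xi>))) \<xi>)
       \<le> real r * \<bar>v \<bullet> e - u \<bullet> e\<bar> + norm (v - u) * norm \<xi>"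
proof -
  let ?a = "v \<bullet> e" and ?b = "u \<bullet> e"
  let ?Ev = "exp (\<i> * complex_of_real (v \<bullet> \<xi>))" and ?Eu = "exp (\<i> * complex_of_real (u \<bullet> \<xi>))"
  have "dpd_iter e r (\<lambda>\<xi>. exp (\<i> * complex_of_real (v \<bullet> \<xi>)) - exp (\<i> * complex_of_real (u \<bullet> \<xi>))) \<xi>
      = \<i> ^ r * (complex_of_real (?a ^ r - ?b ^ r) * ?Ev + complex_of_real (?b ^ r) * (?Ev - ?Eu))"
    by (simp add: dpd_iter_diff[OF dpd_smooth_exp dpd_smooth_exp] dpd_iter_exp power_mult_distrib algebra_simps)
  then have "norm (dpd_iter e r (\<lambda>\<xi>. exp (\<i> * complex_of_real (v \<bullet> \<xi>)) - exp (\<i> * complex_of_real (u \<bullet> \<xi>))) \<xi>)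
      = norm (complex_of_real (?a ^ r - ?b ^ r) * ?Ev + complex_of_real (?b ^ r) * (?Ev - ?Eu))"
    by (simp add: norm_mult norm_power)
  also have "\<dots> \<le> norm (complex_of_real (?a ^ r - ?b ^ r) * ?Ev) + norm (complex_of_real (?b ^ r) * (?Ev - ?Eu))"
    by (rule norm_triangle_ineq)
  also have "\<dots> = \<bar>?a ^ r - ?b ^ r\<bar> + \<bar>?b\<bar> ^ r * norm (?Ev - ?Eu)"
    by (simp only: norm_mult norm_of_real norm_exp_i_times power_abs mult_1_right)
  also have "\<dots> \<le> real r * \<bar>?a - ?b\<bar> + 1 * (norm (v - u) * norm \<xi>)"
    using assms norm_exp_inner_diff_le[of v \<xi> u]
    by (intro add_mono abs_power_diff_le mult_mono power_le_one) auto
  finally show ?thesis by simp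
qed

lemma norm_dpd_iter_phase_amplitude_le:
  fixes A1 A2 :: "'a::real_inner \<Rightarrow> complex" and v u \<xi> :: 'a
  assumes sA1: "dpd_smooth e A1" and sA2: "dpd_smooth e A2" and ve: "\<bar>v \<bullet> e\<bar> \<le> 1" and ue: "\<bar>u \<bullet> e\<bar> \<le> 1"
    and SA: "\<And>r. r \<le> i \<Longrightarrow> norm (dpd_iter e r A1 \<xi>) \<le> SA"
    and SD: "\<And>r. r \<le> i \<Longrightarrow> norm (dpd_iter e r (\<lambda>\<xi>. A1 \<xi> - A2 \<xi>) \<xi>) \<le> SD"
  shows "norm (dpd_iter e i (\<lambda>\<xi>. exp (\<i> * complex_of_real (v \<bullet> \<xi>)) * A1 \<xi> - exp (\<i> * complex_of_real (u \<bullet> \<xi>)) * A2 \<xi>) \<xi>)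
      \<le> 2 ^ i * ((real i * \<bar>v \<bullet> e - u \<bullet> e\<bar> + norm (v - u) * norm \<xi>) * SA + SD)"
proof -
  let ?Ev = "\<lambda>\<xi>. exp (\<i> * complex_of_real (v \<bullet> \<xi>))" and ?Eu = "\<lambda>\<xi>. exp (\<i> * complex_of_real (u \<bullet> \<xi>))"
  have sE: "dpd_smooth e (\<lambda>\<xi>. ?Ev \<xi> - ?Eu \<xi>)" and sD: "dpd_smooth e (\<lambda>\<xi>. A1 \<xi> - A2 \<xi>)"
    by (intro dpd_smooth_diff dpd_smooth_exp sA1 sA2)+
  have binom: "(\<Sum>r = 0..i. real (i choose r) * X * Y) = 2 ^ i * (X * Y)" for X Y
  proof -
    have "(\<Sum>r = 0..i. real (i choose r) * X * Y) = (\<Sum>r = 0..i. real (i choose r)) * (X * Y)"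
      by (simp add: sum_distrib_right mult.assoc)
    also have "(\<Sum>r = 0..i. real (i choose r)) = 2 ^ i"
      using choose_row_sum[of i] by (simp add: atMost_atLeast0 flip: of_nat_sum)
    finally show ?thesis .
  qed
  have b1: "norm (dpd_iter e i (\<lambda>\<xi>. (?Ev \<xi> - ?Eu \<xi>) * A1 \<xi>) \<xi>)
      \<le> (\<Sum>r = 0..i. real (i choose r) * (real i * \<bar>v \<bullet> e - u \<bullet> e\<bar> + norm (v - u) * norm \<xi>) * SA)"
  proof (rule norm_dpd_iter_mult_le[OF sE sA1])
    fix r assume "r \<le> i"
    then show "norm (dpd_iter e r (\<lambda>\<xi>. ?Ev \<xi> - ?Eu \<xi>) \<xi>) \<le> real i * \<bar>v \<bullet> e - u \<bullet> e\<bar> + norm (v - u) * norm \<xi>"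
      using norm_dpd_iter_exp_inner_diff_le[OF ue ve, of r \<xi>]
      by (smt (verit) mult_right_mono abs_ge_zero of_nat_mono)
  qed (use SA in auto)
  have b2: "norm (dpd_iter e i (\<lambda>\<xi>. ?Eu \<xi> * (A1 \<xi> - A2 \<xi>)) \<xi>) \<le> (\<Sum>r = 0..i. real (i choose r) * 1 * SD)"
    by (rule norm_dpd_iter_mult_le[OF dpd_smooth_exp sD])
       (use ue SD in \<open>auto simp: dpd_iter_exp norm_mult norm_power power_le_one\<close>)
  have deco: "(\<lambda>\<xi>. ?Ev \<xi> * A1 \<xi> - ?Eu \<xi> * A2 \<xi>) = (\<lambda>\<xi>. (?Ev \<xi> - ?Eu \<xi>) * A1 \<xi> + ?Eu \<xi> * (A1 \<xi> - A2 \<xi>))"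
    by (simp add: fun_eq_iff algebra_simps)
  have "norm (dpd_iter e i (\<lambda>\<xi>. ?Ev \<xi> * A1 \<xi> - ?Eu \<xi> * A2 \<xi>) \<xi>)
      \<le> norm (dpd_iter e i (\<lambda>\<xi>. (?Ev \<xi> - ?Eu \<xi>) * A1 \<xi>) \<xi>) + norm (dpd_iter e i (\<lambda>\<xi>. ?Eu \<xi> * (A1 \<xi> - A2 \<xi>)) \<xi>)"
    unfolding deco dpd_iter_add[OF dpd_smooth_mult[OF sE sA1] dpd_smooth_mult[OF dpd_smooth_exp sD]]
    by (rule norm_triangle_ineq)
  also have "\<dots> \<le> 2 ^ i * ((real i * \<bar>v \<bullet> e - u \<bullet> e\<bar> + norm (v - u) * norm \<xi>) * SA) + 2 ^ i * (1 * SD)"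
    using b1 b2 unfolding binom by (rule add_mono)
  finally show ?thesis
    by (simp add: algebra_simps)
qed

lemma integral_phase_split:
  fixes A1 A2 :: "'a::euclidean_space \<Rightarrow> complex"
  assumes "cont_supp_cball R A1" "cont_supp_cball R A2"
  shows "(\<integral>\<xi>. exp (\<i> * complex_of_real ((x - y) \<bullet> \<xi>)) * A1 \<xi> \<partial>lborel)
       - (\<integral>\<xi>. exp (\<i> * complex_of_real ((z - y) \<bullet> \<xi>)) * A2 \<xi> \<partial>lborel)
     = (\<integral>\<xi>. exp (\<i> * complex_of_real ((x0 - y) \<bullet> \<xi>)) *
           (exp (\<i> * complex_of_real ((x - x0) \<bullet> \<xi>)) * A1 \<xi> - exp (\<i> * complex_of_real ((z - x0) \<bullet> \<xi>)) * A2 \<xi>) \<partial>lborel)"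
proof -
  have split: "exp (\<i> * complex_of_real ((p - y) \<bullet> \<xi>)) =
      exp (\<i> * complex_of_real ((x0 - y) \<bullet> \<xi>)) * exp (\<i> * complex_of_real ((p - x0) \<bullet> \<xi>))" for p \<xi>
  proof -
    have "(p - y) \<bullet> \<xi> = (x0 - y) \<bullet> \<xi> + (p - x0) \<bullet> \<xi>"
      by (simp add: inner_diff_left)
    then show ?thesis by (simp add: distrib_left exp_add)
  qed
  have "(\<integral>\<xi>. exp (\<i> * complex_of_real ((x - y) \<bullet> \<xi>)) * A1 \<xi> \<partial>lborel)
       - (\<integral>\<xi>. exp (\<i> * complex_of_real ((z - y) \<bullet> \<xi>)) * A2 \<xi> \<partial>lborel)
      = (\<integral>\<xi>. exp (\<i> * complex_of_real ((x - y) \<bullet> \<xi>)) * A1 \<xi> - exp (\<i> * complex_of_real ((z - y) \<bullet> \<xi>)) * A2 \<xi> \<partial>lborel)"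
    by (intro Bochner_Integration.integral_diff[symmetric]
        integrable_cont_supp_cball[OF cont_supp_cball_mult[OF continuous_on_exp_inner assms(1)]]
        integrable_cont_supp_cball[OF cont_supp_cball_mult[OF continuous_on_exp_inner assms(2)]])
  also have "\<dots> = (\<integral>\<xi>. exp (\<i> * complex_of_real ((x0 - y) \<bullet> \<xi>)) *
           (exp (\<i> * complex_of_real ((x - x0) \<bullet> \<xi>)) * A1 \<xi> - exp (\<i> * complex_of_real ((z - x0) \<bullet> \<xi>)) * A2 \<xi>) \<partial>lborel)"
    by (simp only: split[of x] split[of z] right_diff_distrib mult.assoc)
  finally show ?thesis .
qed

lemma norm_dpd_iter_phase_annulus_le:
  fixes A1 A2 :: "'a::euclidean_space \<Rightarrow> complex"
  defines "n \<equiv> DIM('a)"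
  assumes e: "e \<in> Basis" and sA1: "dpd_smooth e A1" and sA2: "dpd_smooth e A2"
    and x: "x \<in> cube x0 l" and z: "z \<in> cube x0 l" and l: "0 \<le> l" "l \<le> 1"
    and \<xi>: "\<xi> \<in> annulus C0 j" and C0: "1 \<le> C0" and i: "i \<le> n + 1"
    and Ca: "0 \<le> Ca" "\<And>r. r \<le> i \<Longrightarrow> norm (dpd_iter e r A1 \<xi>) \<le> Ca * Q"
    and Db: "0 \<le> Db" "\<And>r. r \<le> i \<Longrightarrow> norm (dpd_iter e r (\<lambda>\<xi>. A1 \<xi> - A2 \<xi>) \<xi>) \<le> Db * (2 ^ j * l) * Q"
    and Q: "0 \<le> Q"
  shows "norm (dpd_iter e i (\<lambda>\<xi>. exp (\<i> * complex_of_real ((x - x0) \<bullet> \<xi>)) * A1 \<xi>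
                                - exp (\<i> * complex_of_real ((z - x0) \<bullet> \<xi>)) * A2 \<xi>) \<xi>)
      \<le> 2 ^ (n + 1) * ((real (n + 1) + 2 * real n * C0) * Ca + Db) * (2 ^ j * l) * Q"
proof -
  let ?v = "x - x0" and ?u = "z - x0"
  have vu: "\<bar>?v \<bullet> e\<bar> \<le> 1" "\<bar>?u \<bullet> e\<bar> \<le> 1"
    using x z e l unfolding cube_def by fastforce+
  have "\<bar>?v \<bullet> e - ?u \<bullet> e\<bar> \<le> l"
    using cube_inner_diff_le[OF x z e] by (simp add: inner_diff_left)
  then have "real i * \<bar>?v \<bullet> e - ?u \<bullet> e\<bar> \<le> real (n + 1) * (2 ^ j * l)"
    using i l by (intro mult_mono) (auto intro: order_trans[of _ l] simp: mult_le_cancel_right1)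
  moreover have "norm (?v - ?u) * norm \<xi> \<le> (real n * l) * (2 * C0 * 2 ^ j)"
  proof (intro mult_mono)
    show "norm (?v - ?u) \<le> real n * l"
      using norm_le_l1[of "x - z"] sum_abs_inner_diff_cube_le[OF x z] by (simp add: n_def)
  qed (use \<xi> l in \<open>auto simp: annulus_def\<close>)
  ultimately have phase: "real i * \<bar>?v \<bullet> e - ?u \<bullet> e\<bar> + norm (?v - ?u) * norm \<xi> \<le> (real (n + 1) + 2 * real n * C0) * (2 ^ j * l)"
    by (simp add: algebra_simps)
  have "norm (dpd_iter e i (\<lambda>\<xi>. exp (\<i> * complex_of_real (?v \<bullet> \<xi>)) * A1 \<xi> - exp (\<i> * complex_of_real (?u \<bullet> \<xi>)) * A2 \<xi>) \<xi>)
      \<le> 2 ^ i * ((real i * \<bar>?v \<bullet> e - ?u \<bullet> e\<bar> + norm (?v - ?u) * norm \<xi>) * (Ca * Q) + Db * (2 ^ j * l) * Q)"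
    by (rule norm_dpd_iter_phase_amplitude_le[OF sA1 sA2 vu(1,2) Ca(2) Db(2)])
  also have "\<dots> \<le> 2 ^ (n + 1) * (((real (n + 1) + 2 * real n * C0) * (2 ^ j * l)) * (Ca * Q) + Db * (2 ^ j * l) * Q)"
    using phase i Ca Db Q l by (intro mult_mono add_mono mult_right_mono power_increasing) auto
  finally show ?thesis
    by (simp add: algebra_simps)
qed

definition kernel_const :: "real \<Rightarrow> nat \<Rightarrow> real \<Rightarrow> real \<Rightarrow> real \<Rightarrow> real" where
  "kernel_const C0 n Ca Db Mp =
     fourier_decay_const n (n + 1) (2 * C0) * 2 ^ (n + 1) * Mp * (2 ^ (n + 1) * ((real (n + 1) + 2 * real n * C0) * Ca + Db) * C0 ^ n)"

lemma kernel_const_nonneg: "1 \<le> C0 \<Longrightarrow> 0 \<le> Ca \<Longrightarrow> 0 \<le> Db \<Longrightarrow> 0 \<le> Mp \<Longrightarrow> 0 \<le> kernel_const C0 n Ca Db Mp"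
  unfolding kernel_const_def fourier_decay_const_def by (intro mult_nonneg_nonneg add_nonneg_nonneg) auto

lemma kernel_diff_eq:
  fixes a :: "'a::euclidean_space \<Rightarrow> 'a \<Rightarrow> complex"
  assumes "j \<noteq> 0"
  shows "kernel_K psim1 psi a j x y - kernel_K psim1 psi a j z y =
    complex_of_real ((2 * pi) powr - real DIM('a)) *
     ((\<integral>\<xi>. exp (\<i> * complex_of_real ((x - y) \<bullet> \<xi>)) * (a x \<xi> * lp_cutoff psi j \<xi>) \<partial>lborel)
    - (\<integral>\<xi>. exp (\<i> * complex_of_real ((z - y) \<bullet> \<xi>)) * (a z \<xi> * lp_cutoff psi j \<xi>) \<partial>lborel))"
    "kernel_Kstar psim1 psi a j x y - kernel_Kstar psim1 psi a j z y =
    complex_of_real ((2 * pi) powr - real DIM('a)) *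
     ((\<integral>\<xi>. exp (\<i> * complex_of_real ((x - y) \<bullet> \<xi>)) * (a y \<xi> * lp_cutoff psi j \<xi>) \<partial>lborel)
    - (\<integral>\<xi>. exp (\<i> * complex_of_real ((z - y) \<bullet> \<xi>)) * (a y \<xi> * lp_cutoff psi j \<xi>) \<partial>lborel))"
  unfolding kernel_K_def kernel_Kstar_def piece_eq_lp_cutoff[OF assms] by (simp_all add: right_diff_distrib)

context
  fixes C0 :: real and psim1 psi :: "'a::euclidean_space \<Rightarrow> real"
  assumes LP: "LP_data C0 psim1 psi"
begin

lemma norm_fourier_lp_cutoff_mult_le:
  fixes f :: "'a \<Rightarrow> complex"
  defines "n \<equiv> DIM('a)"
  assumes Mp: "\<And>e i \<xi>. e \<in> Basis \<Longrightarrow> i \<le> n + 1 \<Longrightarrow> norm (dpd_iter e i (lp_cutoff psi j) \<xi>) \<le> Mp"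
    and cont: "continuous_on UNIV f" and smooth: "\<And>e. e \<in> Basis \<Longrightarrow> dpd_smooth e f"
    and F: "\<And>e i \<xi>. e \<in> Basis \<Longrightarrow> i \<le> n + 1 \<Longrightarrow> \<xi> \<in> annulus C0 j \<Longrightarrow> norm (dpd_iter e i f \<xi>) \<le> F"
    and F0: "0 \<le> F"
  shows "norm (\<integral>\<xi>. exp (\<i> * complex_of_real (w \<bullet> \<xi>)) * (f \<xi> * lp_cutoff psi j \<xi>) \<partial>lborel)
      \<le> fourier_decay_const n (n + 1) (2 * C0) * (2 ^ (n + 1) * F * Mp) * (2 ^ j) ^ n / max 1 (norm w) ^ (n + 1)"
proof -
  have C0: "1 \<le> C0" by (rule LP_data_C0[OF LP])
  have smooth_cutoff: "dpd_smooth e (lp_cutoff psi j)" if "e \<in> Basis" for e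
    using LP that unfolding LP_data_def by (simp add: dpd_iter_lp_cutoff(2))
  have bound: "norm (dpd_iter e m (\<lambda>\<xi>. f \<xi> * lp_cutoff psi j \<xi>) \<xi>) \<le> 2 ^ (n + 1) * F * Mp"
    if e: "e \<in> Basis" and m: "m \<le> n + 1" for e m \<xi>
  proof -
    have Mp0: "0 \<le> Mp" using Mp[OF e, of 0] order_trans[OF norm_ge_zero] by blast
    have "norm (dpd_iter e m (\<lambda>\<xi>. f \<xi> * lp_cutoff psi j \<xi>) \<xi>) \<le> 2 ^ m * F * Mp"
      by (rule norm_dpd_iter_mult_lp_cutoff_le[OF LP e smooth[OF e]]) (use Mp e m F F0 in auto)
    also have "\<dots> \<le> 2 ^ (n + 1) * F * Mp"
      using m F0 Mp0 by (intro mult_right_mono power_increasing) auto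
    finally show ?thesis .
  qed
  obtain e0 :: 'a where e0: "e0 \<in> Basis"
    using nonempty_Basis by blast
  show ?thesis
    unfolding n_def
  proof (rule norm_fourier_integral_decay)
    show "cont_supp_cball (2 * C0 * 2 ^ j) (\<lambda>\<xi>. f \<xi> * lp_cutoff psi j \<xi>)"
      by (rule cont_supp_cball_mult[OF cont cont_supp_cball_lp_cutoff[OF LP]])
    show "norm (f \<xi> * lp_cutoff psi j \<xi>) \<le> 2 ^ (DIM('a) + 1) * F * Mp" for \<xi>
      using bound[OF e0, of 0 \<xi>] by (simp add: n_def)
    show "norm (dpd_iter e (DIM('a) + 1) (\<lambda>\<xi>. f \<xi> * lp_cutoff psi j \<xi>) \<xi>) \<le> 2 ^ (DIM('a) + 1) * F * Mp"
      if "e \<in> Basis" for e \<xi>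
      using bound[OF that, of "n + 1" \<xi>] by (simp add: n_def)
  qed (use C0 smooth smooth_cutoff in \<open>auto intro: dpd_smooth_mult\<close>)
qed

lemma norm_kernel_piece_diff_le:
  fixes A1 A2 :: "'a \<Rightarrow> complex"
  defines "n \<equiv> DIM('a)"
  assumes Mp: "\<And>e i \<xi>. e \<in> Basis \<Longrightarrow> i \<le> n + 1 \<Longrightarrow> norm (dpd_iter e i (lp_cutoff psi j) \<xi>) \<le> Mp"
    and x: "x \<in> cube x0 l" and z: "z \<in> cube x0 l" and l: "0 \<le> l" "l \<le> 1"
    and cont: "continuous_on UNIV A1" "continuous_on UNIV A2"
    and smooth: "\<And>e. e \<in> Basis \<Longrightarrow> dpd_smooth e A1" "\<And>e. e \<in> Basis \<Longrightarrow> dpd_smooth e A2"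
    and Ca: "0 \<le> Ca" "\<And>e i \<xi>. e \<in> Basis \<Longrightarrow> i \<le> n + 1 \<Longrightarrow> \<xi> \<in> annulus C0 j \<Longrightarrow>
               norm (dpd_iter e i A1 \<xi>) \<le> Ca * (C0 ^ n / 2 ^ (j * n))"
    and Db: "0 \<le> Db" "\<And>e i \<xi>. e \<in> Basis \<Longrightarrow> i \<le> n + 1 \<Longrightarrow> \<xi> \<in> annulus C0 j \<Longrightarrow>
               norm (dpd_iter e i (\<lambda>\<xi>. A1 \<xi> - A2 \<xi>) \<xi>) \<le> Db * (2 ^ j * l) * (C0 ^ n / 2 ^ (j * n))"
  shows "norm ((\<integral>\<xi>. exp (\<i> * complex_of_real ((x - y) \<bullet> \<xi>)) * (A1 \<xi> * lp_cutoff psi j \<xi>) \<partial>lborel)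
       - (\<integral>\<xi>. exp (\<i> * complex_of_real ((z - y) \<bullet> \<xi>)) * (A2 \<xi> * lp_cutoff psi j \<xi>) \<partial>lborel))
     \<le> kernel_const C0 n Ca Db Mp * 2 ^ j * l * decay_weight x0 (n + 1) y"
proof -
  define F where "F = 2 ^ (n + 1) * ((real (n + 1) + 2 * real n * C0) * Ca + Db) * (2 ^ j * l) * (C0 ^ n / 2 ^ (j * n))"
  define f where "f \<xi> = exp (\<i> * complex_of_real ((x - x0) \<bullet> \<xi>)) * A1 \<xi> - exp (\<i> * complex_of_real ((z - x0) \<bullet> \<xi>)) * A2 \<xi>" for \<xi>
  have C0: "1 \<le> C0" by (rule LP_data_C0[OF LP])
  have "norm (\<integral>\<xi>. exp (\<i> * complex_of_real ((x0 - y) \<bullet> \<xi>)) * (f \<xi> * lp_cutoff psi j \<xi>) \<partial>lborel)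
      \<le> fourier_decay_const n (n + 1) (2 * C0) * (2 ^ (n + 1) * F * Mp) * (2 ^ j) ^ n / max 1 (norm (x0 - y)) ^ (n + 1)"
    unfolding n_def
  proof (rule norm_fourier_lp_cutoff_mult_le)
    show "continuous_on UNIV f"
      unfolding f_def by (intro continuous_on_diff continuous_on_mult continuous_on_exp_inner cont)
    show "dpd_smooth e f" if "e \<in> Basis" for e
      unfolding f_def using that by (intro dpd_smooth_diff dpd_smooth_mult dpd_smooth_exp smooth)
    show "norm (dpd_iter e i f \<xi>) \<le> F" if "e \<in> Basis" "i \<le> DIM('a) + 1" "\<xi> \<in> annulus C0 j" for e i \<xi>
      unfolding f_def F_def n_def
      by (rule norm_dpd_iter_phase_annulus_le[OF that(1) smooth(1,2)[OF that(1)] x z l that(3) C0 that(2)])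
         (use that Ca(1) Db(1) Ca(2)[OF that(1)] Db(2)[OF that(1)] C0 in \<open>auto simp: n_def\<close>)
  qed (use Mp C0 Ca Db l in \<open>auto simp: F_def n_def\<close>)
  also have "\<dots> = kernel_const C0 n Ca Db Mp * 2 ^ j * l * decay_weight x0 (n + 1) y"
    using C0 by (simp add: kernel_const_def decay_weight_def F_def norm_minus_commute power_mult field_simps)
  also have "(\<integral>\<xi>. exp (\<i> * complex_of_real ((x0 - y) \<bullet> \<xi>)) * (f \<xi> * lp_cutoff psi j \<xi>) \<partial>lborel) =
      (\<integral>\<xi>. exp (\<i> * complex_of_real ((x0 - y) \<bullet> \<xi>)) *
           (exp (\<i> * complex_of_real ((x - x0) \<bullet> \<xi>)) * (A1 \<xi> * lp_cutoff psi j \<xi>)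
          - exp (\<i> * complex_of_real ((z - x0) \<bullet> \<xi>)) * (A2 \<xi> * lp_cutoff psi j \<xi>)) \<partial>lborel)"
    unfolding f_def by (simp add: algebra_simps)
  also have "\<dots> = (\<integral>\<xi>. exp (\<i> * complex_of_real ((x - y) \<bullet> \<xi>)) * (A1 \<xi> * lp_cutoff psi j \<xi>) \<partial>lborel)
       - (\<integral>\<xi>. exp (\<i> * complex_of_real ((z - y) \<bullet> \<xi>)) * (A2 \<xi> * lp_cutoff psi j \<xi>) \<partial>lborel)"
    by (rule integral_phase_split[symmetric, OF cont_supp_cball_mult[OF cont(1) cont_supp_cball_lp_cutoff[OF LP]]
        cont_supp_cball_mult[OF cont(2) cont_supp_cball_lp_cutoff[OF LP]]])
  finally show ?thesis .
qed


lemma kernel_K_diff_estimate: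
  fixes a :: "'a \<Rightarrow> 'a \<Rightarrow> complex"
  assumes symb: "symbol_S (- real DIM('a)) 0 \<delta> a" and \<delta>: "0 \<le> \<delta>" "\<delta> < 1"
  shows "\<exists>C. \<forall>u x0 l j x z. schwartz u \<longrightarrow> 0 < l \<longrightarrow> l < 1 \<longrightarrow> 1 \<le> j \<longrightarrow>
           x \<in> cube x0 l \<longrightarrow> z \<in> cube x0 l \<longrightarrow>
           (\<integral>\<^sup>+ y. ennreal (norm (u y) * norm (kernel_K psim1 psi a j x y - kernel_K psim1 psi a j z y)) \<partial>lborel)
             \<le> ennreal (C * 2 ^ j * l) * maximal_fn u x0"
proof -
  define n where "n = DIM('a)"
  have C0: "1 \<le> C0" by (rule LP_data_C0[OF LP])
  obtain Ca where Ca0: "0 \<le> Ca"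
    and Ca: "\<And>e i x \<xi>. e \<in> Basis \<Longrightarrow> i \<le> n + 1 \<Longrightarrow> norm (dpd_iter e i (a x) \<xi>) \<le> Ca * jbr \<xi> powr (- real n)"
    using symbol_S_uniform_xi_bound[OF symb, of "n + 1"] by (auto simp: n_def)
  obtain Cb where Cb0: "0 \<le> Cb"
    and Cb: "\<And>e i x z \<xi>. e \<in> Basis \<Longrightarrow> i \<le> n + 1 \<Longrightarrow> norm (dpd_iter e i (a x) \<xi> - dpd_iter e i (a z) \<xi>)
               \<le> Cb * jbr \<xi> powr (\<delta> - real n) * (\<Sum>b\<in>Basis. \<bar>(x - z) \<bullet> b\<bar>)"
    using symbol_S_uniform_x_lipschitz[OF symb, of "n + 1"] by (auto simp: n_def algebra_simps)
  obtain Mp where Mp0: "0 \<le> Mp"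
    and Mp: "\<And>e i \<xi> j. e \<in> Basis \<Longrightarrow> i \<le> n + 1 \<Longrightarrow> norm (dpd_iter e i (lp_cutoff psi j) \<xi>) \<le> Mp"
    using dpd_iter_lp_cutoff_uniform_bound[OF LP, of "n + 1"] by auto
  define Db where "Db = Cb * (1 + 2 * C0) * real n"
  define Kc where "Kc = (2 * pi) powr - real n * kernel_const C0 n Ca Db Mp"
  have Kc0: "0 \<le> Kc"
    unfolding Kc_def Db_def using kernel_const_nonneg[OF C0 Ca0 _ Mp0] Cb0 C0 by simp
  have smooth: "dpd_smooth e (a w)" if "e \<in> Basis" for e w
    using smooth_fn_dpd_smooth(1)[OF symbol_S_smooth_fn[OF symb] that] .
  have cont: "continuous_on UNIV (a w)" for w
    using smooth_fn_continuous[OF symbol_S_smooth_fn[OF symb]] .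
  show ?thesis
  proof (rule maximal_fn_estimate_of_pointwise[OF Kc0])
    fix x0 :: 'a and l :: real and j :: nat and x z :: 'a
    assume l: "0 < l" "l < 1" and j: "1 \<le> j" and x: "x \<in> cube x0 l" and z: "z \<in> cube x0 l"
    have "norm (kernel_K psim1 psi a j x y - kernel_K psim1 psi a j z y) \<le> Kc * 2 ^ j * l * decay_weight x0 (n + 1) y" for y
    proof -
      have "norm ((\<integral>\<xi>. exp (\<i> * complex_of_real ((x - y) \<bullet> \<xi>)) * (a x \<xi> * lp_cutoff psi j \<xi>) \<partial>lborel)
          - (\<integral>\<xi>. exp (\<i> * complex_of_real ((z - y) \<bullet> \<xi>)) * (a z \<xi> * lp_cutoff psi j \<xi>) \<partial>lborel))
         \<le> kernel_const C0 n Ca Db Mp * 2 ^ j * l * decay_weight x0 (n + 1) y"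
        unfolding n_def
      proof (rule norm_kernel_piece_diff_le[OF Mp[unfolded n_def] x z])
        fix e :: 'a and i and \<xi> :: 'a assume e: "e \<in> Basis" and i: "i \<le> DIM('a) + 1" and \<xi>: "\<xi> \<in> annulus C0 j"
        show "norm (dpd_iter e i (a x) \<xi>) \<le> Ca * (C0 ^ DIM('a) / 2 ^ (j * DIM('a)))"
          using order_trans[OF Ca[OF e] mult_left_mono[OF jbr_powr_neg_annulus_le[OF \<xi>]]] i C0 Ca0
          by (simp add: n_def)
        have "norm (dpd_iter e i (\<lambda>\<xi>. a x \<xi> - a z \<xi>) \<xi>) = norm (dpd_iter e i (a x) \<xi> - dpd_iter e i (a z) \<xi>)"
          by (simp add: dpd_iter_diff[OF smooth(1)[OF e] smooth(1)[OF e]])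
        also have "\<dots> \<le> Cb * jbr \<xi> powr (\<delta> - real n) * (\<Sum>b\<in>Basis. \<bar>(x - z) \<bullet> b\<bar>)"
          using i by (intro Cb[OF e]) (simp add: n_def)
        also have "\<dots> \<le> Cb * ((1 + 2 * C0) * 2 ^ j * (C0 ^ n / 2 ^ (j * n))) * (real n * l)"
          using jbr_powr_annulus_le[OF \<xi> C0 \<delta>(1), of n] \<delta>(2) sum_abs_inner_diff_cube_le[OF x z] Cb0 C0
          by (intro mult_mono mult_left_mono) (auto simp: n_def intro: sum_nonneg)
        also have "\<dots> = Db * (2 ^ j * l) * (C0 ^ DIM('a) / 2 ^ (j * DIM('a)))"
          by (simp add: Db_def n_def algebra_simps)
        finally show "norm (dpd_iter e i (\<lambda>\<xi>. a x \<xi> - a z \<xi>) \<xi>) \<le> Db * (2 ^ j * l) * (C0 ^ DIM('a) / 2 ^ (j * DIM('a)))" .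
      qed (use l Ca0 Cb0 C0 smooth cont in \<open>auto simp: Db_def\<close>)
      then show ?thesis
        using j by (simp add: kernel_diff_eq(1) norm_mult Kc_def n_def mult_left_mono mult.assoc)
    qed
    then show "AE y in lborel. norm (kernel_K psim1 psi a j x y - kernel_K psim1 psi a j z y)
        \<le> Kc * 2 ^ j * l * decay_weight x0 (DIM('a) + 1) y"
      by (simp add: n_def)
  qed
qed

lemma kernel_Kstar_diff_estimate:
  fixes a :: "'a \<Rightarrow> 'a \<Rightarrow> complex"
  assumes symb: "symbol_LinfS (- real DIM('a)) 0 a"
  shows "\<exists>C. \<forall>u x0 l j x z. schwartz u \<longrightarrow> 0 < l \<longrightarrow> l < 1 \<longrightarrow> 1 \<le> j \<longrightarrow>
           x \<in> cube x0 l \<longrightarrow> z \<in> cube x0 l \<longrightarrow>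
           (\<integral>\<^sup>+ y. ennreal (norm (u y) * norm (kernel_Kstar psim1 psi a j x y - kernel_Kstar psim1 psi a j z y)) \<partial>lborel)
             \<le> ennreal (C * 2 ^ j * l) * maximal_fn u x0"
proof -
  define n where "n = DIM('a)"
  have C0: "1 \<le> C0" by (rule LP_data_C0[OF LP])
  obtain Ca where Ca0: "0 \<le> Ca"
    and Ca: "AE y in lborel. \<forall>e\<in>Basis. \<forall>i\<le>n + 1. \<forall>\<xi>. norm (dpd_iter e i (a y) \<xi>) \<le> Ca * jbr \<xi> powr (- real n)"
    using symbol_LinfS_AE_bound[OF symb, of "n + 1"] by (auto simp: n_def)
  obtain Mp where Mp0: "0 \<le> Mp"
    and Mp: "\<And>e i \<xi> j. e \<in> Basis \<Longrightarrow> i \<le> n + 1 \<Longrightarrow> norm (dpd_iter e i (lp_cutoff psi j) \<xi>) \<le> Mp"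
    using dpd_iter_lp_cutoff_uniform_bound[OF LP, of "n + 1"] by auto
  define Kc where "Kc = (2 * pi) powr - real n * kernel_const C0 n Ca 0 Mp"
  have Kc0: "0 \<le> Kc"
    unfolding Kc_def using kernel_const_nonneg[OF C0 Ca0 _ Mp0] by simp
  show ?thesis
  proof (rule maximal_fn_estimate_of_pointwise[OF Kc0])
    fix x0 :: 'a and l :: real and j :: nat and x z :: 'a
    assume l: "0 < l" "l < 1" and j: "1 \<le> j" and x: "x \<in> cube x0 l" and z: "z \<in> cube x0 l"
    have "AE y in lborel. norm (kernel_Kstar psim1 psi a j x y - kernel_Kstar psim1 psi a j z y)
        \<le> Kc * 2 ^ j * l * decay_weight x0 (n + 1) y"
      using Ca
    proof eventually_elim
      case (elim y)
      have smooth: "dpd_smooth e (a y)" if "e \<in> Basis" for e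
        using smooth_fn_dpd_smooth(1)[OF symbol_LinfS_smooth_fn[OF symb] that] .
      have "norm ((\<integral>\<xi>. exp (\<i> * complex_of_real ((x - y) \<bullet> \<xi>)) * (a y \<xi> * lp_cutoff psi j \<xi>) \<partial>lborel)
          - (\<integral>\<xi>. exp (\<i> * complex_of_real ((z - y) \<bullet> \<xi>)) * (a y \<xi> * lp_cutoff psi j \<xi>) \<partial>lborel))
         \<le> kernel_const C0 n Ca 0 Mp * 2 ^ j * l * decay_weight x0 (n + 1) y"
        unfolding n_def
      proof (rule norm_kernel_piece_diff_le[OF Mp[unfolded n_def] x z])
        fix e :: 'a and i and \<xi> :: 'a assume e: "e \<in> Basis" and i: "i \<le> DIM('a) + 1" and \<xi>: "\<xi> \<in> annulus C0 j"
        show "norm (dpd_iter e i (a y) \<xi>) \<le> Ca * (C0 ^ DIM('a) / 2 ^ (j * DIM('a)))"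
          using order_trans[OF _ mult_left_mono[OF jbr_powr_neg_annulus_le[OF \<xi>]]] elim e i C0 Ca0
          by (simp add: n_def)
        show "norm (dpd_iter e i (\<lambda>\<xi>. a y \<xi> - a y \<xi>) \<xi>) \<le> 0 * (2 ^ j * l) * (C0 ^ DIM('a) / 2 ^ (j * DIM('a)))"
          using dpd_iter_eq_0_on_open[of UNIV "\<lambda>\<xi>. a y \<xi> - a y \<xi>"] by simp
      qed (use l Ca0 smooth smooth_fn_continuous[OF symbol_LinfS_smooth_fn[OF symb]] in auto)
      then show ?case
        using j by (simp add: kernel_diff_eq(2) norm_mult Kc_def n_def mult_left_mono mult.assoc)
    qed
    then show "AE y in lborel. norm (kernel_Kstar psim1 psi a j x y - kernel_Kstar psim1 psi a j z y)
        \<le> Kc * 2 ^ j * l * decay_weight x0 (DIM('a) + 1) y"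
      by (simp add: n_def)
  qed
qed

end

theorem lemma2p6:
  fixes a :: "'a::euclidean_space \<Rightarrow> 'a \<Rightarrow> complex"
    and psim1 psi :: "'a \<Rightarrow> real" and C0 \<delta> :: real
  assumes LP: "LP_data C0 psim1 psi"
  shows "(symbol_S (- real DIM('a)) 0 \<delta> a \<and> 0 \<le> \<delta> \<and> \<delta> < 1 \<longrightarrow>
           (\<exists>C. \<forall>u x0 l j x z. schwartz u \<longrightarrow> 0 < l \<longrightarrow> l < 1 \<longrightarrow> 1 \<le> j \<longrightarrow>
               x \<in> cube x0 l \<longrightarrow> z \<in> cube x0 l \<longrightarrow>
               (\<integral>\<^sup>+ y. ennreal (norm (u y) * norm (kernel_K psim1 psi a j x y - kernel_K psim1 psi a j z y)) \<partial>lborel)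
                 \<le> ennreal (C * 2 ^ j * l) * maximal_fn u x0)) \<and>
         (symbol_LinfS (- real DIM('a)) 0 a \<longrightarrow>
           (\<exists>C. \<forall>u x0 l j x z. schwartz u \<longrightarrow> 0 < l \<longrightarrow> l < 1 \<longrightarrow> 1 \<le> j \<longrightarrow>
               x \<in> cube x0 l \<longrightarrow> z \<in> cube x0 l \<longrightarrow>
               (\<integral>\<^sup>+ y. ennreal (norm (u y) * norm (kernel_Kstar psim1 psi a j x y - kernel_Kstar psim1 psi a j z y)) \<partial>lborel)
                 \<le> ennreal (C * 2 ^ j * l) * maximal_fn u x0))"
  using kernel_K_diff_estimate[OF LP] kernel_Kstar_diff_estimate[OF LP] by blast

end
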